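(* Let $\mathcal{H}_A,\mathcal{H}_B$ be finite-dimensional Hilbert spaces, let $|\Psi\rangle,|\Phi\rangle\in\mathcal{H}_A\otimes\mathcal{H}_B$ be unit vectors (not necessarily orthogonal), and let $\alpha,\beta\in\mathbb{C}$ with $|\alpha|^2+|\beta|^2=1$ such that $|\Gamma\rangle=\alpha|\Psi\rangle+\beta|\Phi\rangle\neq0$. Then for every $t\in(0,1)$, $$\big\|\,|\Gamma\rangle\big\|^2\,E(\Gamma)\le f(t),\qquad f(t)=\frac{t|\beta|^2+(1-t)|\alpha|^2}{t(1-t)}\Big[tE(\Psi)+(1-t)E(\Phi)+h_2(t)\Big].$$
   Context: $S(\rho)=-\mathrm{Tr}(\rho\log\rho)$ is the von Neumann entropy (logarithm base 2). For a nonzero vector $|\chi\rangle\in\mathcal{H}_A\otimes\mathcal{H}_B$, its entanglement is $E(\chi)=S\big(\mathrm{Tr}_B|\chi\rangle\langle\chi|/\langle\chi|\chi\rangle\big)$, i.e. the entropy of entanglement of the normalized vector. $h_2(x)=-x\log x-(1-x)\log(1-x)$ is the binary entropy function. *)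

theory Defs
  imports "Jordan_Normal_Form.Char_Poly"
begin

definition eta2 :: "real \<Rightarrow> real" where
  "eta2 x = (if x \<le> 0 then 0 else x * log 2 x)"

definition h2 :: "real \<Rightarrow> real" where
  "h2 x = - x * log 2 x - (1 - x) * log 2 (1 - x)"

definition eigvals_list :: "complex mat \<Rightarrow> complex list" where
  "eigvals_list A = (SOME es. char_poly A = (\<Prod>a\<leftarrow>es. [:- a, 1:]))"

(* von Neumann entropy S(rho) = - Tr(rho log2 rho) = - sum of lambda log2 lambda over eigenvalues *)
definition vn_entropy :: "complex mat \<Rightarrow> real" where
  "vn_entropy \<rho> = - (\<Sum>x\<leftarrow>eigvals_list \<rho>. eta2 (Re x))"

(* H_A = C^dA, H_B = C^dB, H_A \<otimes> H_B = C^(dA*dB) with |i>\<otimes>|j> = e_(i*dB+j) *)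
definition outer :: "complex vec \<Rightarrow> complex mat" where
  "outer v = mat (dim_vec v) (dim_vec v) (\<lambda>(k, l). v $ k * cnj (v $ l))"

definition ptrace_B :: "nat \<Rightarrow> nat \<Rightarrow> complex mat \<Rightarrow> complex mat" where
  "ptrace_B dA dB X = mat dA dA (\<lambda>(i, i'). \<Sum>j<dB. X $$ (i * dB + j, i' * dB + j))"

definition vnorm2 :: "complex vec \<Rightarrow> real" where
  "vnorm2 v = (\<Sum>k<dim_vec v. (cmod (v $ k))\<^sup>2)"

definition ent :: "nat \<Rightarrow> nat \<Rightarrow> complex vec \<Rightarrow> real" where
  "ent dA dB \<chi> = vn_entropy (ptrace_B dA dB (complex_of_real (1 / vnorm2 \<chi>) \<cdot>\<^sub>m outer \<chi>))"

end

theory Submission imports Defs "Jordan_Normal_Form.Schur_Decomposition" begin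

(* Write S for the von Neumann entropy in nats, R(v) = Tr_B |v><v| for the reduced matrix of a
   (not necessarily normalized) vector, and W(X) = tr X ln(tr X) + S(X) = tr X S(X / tr X), so
   that ln 2 |v|^2 E(v) = W(R v). Let G = al P + be F and N = (t|be|^2 + (1-t)|al|^2)/(t(1-t)).
   A partner vector G' = ga P + de F with al cnj(be) + ga cnj(de) = 0, |al|^2 + |ga|^2 = N t and
   |be|^2 + |de|^2 = N (1-t) gives R G + R G' = N t R P + N (1-t) R F, and then
     W(R G) \<le> W(R G) + W(R G') \<le> W(R G + R G')            (W \<ge> 0, concavity)
            \<le> xlnx N + S(N t R P) + S(N (1-t) R F)           (subadditivity)
            = N t S(R P) + N (1-t) S(R F) + N h2(t) ln 2      (scaling). *)

(* Scalar inequalities for xlnx x = x ln x (extended by 0 to x \<le> 0). *)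

definition xlnx :: "real \<Rightarrow> real" where
  "xlnx x = (if x \<le> 0 then 0 else x * ln x)"

lemma xlnx_zero [simp]: "xlnx 0 = 0"
  unfolding xlnx_def by simp

lemma eta2_xlnx: "eta2 x = xlnx x / ln 2"
  unfolding eta2_def xlnx_def log_def by simp

lemma ln_ratio_lower:
  fixes a b :: real
  assumes a: "a > 0" and b: "b > 0"
  shows "a * (ln a - ln b) \<ge> a - b"
proof -
  have "ln (b / a) \<le> b / a - 1" using a b by (intro ln_le_minus_one) auto
  hence "a * ln (b / a) \<le> a * (b / a - 1)" using a by (intro mult_left_mono) auto
  thus ?thesis using a b by (simp add: ln_div algebra_simps)
qed

(* The tangent line of the convex function xlnx at m lies below it. *)
lemma xlnx_tangent:
  assumes "l \<ge> 0" and "m > 0"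
  shows "xlnx l - l * ln m \<ge> l - m"
  using ln_ratio_lower[of l m] assms by (cases "l = 0") (auto simp: xlnx_def algebra_simps)

lemma xlnx_jensen:
  assumes K: "finite K" and D: "\<And>k. k \<in> K \<Longrightarrow> D k \<ge> 0" and D1: "sum D K = 1"
    and l: "\<And>k. k \<in> K \<Longrightarrow> l k \<ge> 0"
  shows "xlnx (\<Sum>k\<in>K. D k * l k) \<le> (\<Sum>k\<in>K. D k * xlnx (l k))"
proof -
  define m where "m = (\<Sum>k\<in>K. D k * l k)"
  have m0: "m \<ge> 0" unfolding m_def using D l by (auto intro: sum_nonneg)
  show ?thesis
  proof (cases "m = 0")
    case True
    hence "\<forall>k\<in>K. D k * l k = 0"
      using sum_nonneg_eq_0_iff[OF K, of "\<lambda>k. D k * l k"] D l unfolding m_def by auto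
    hence "(\<Sum>k\<in>K. D k * xlnx (l k)) = 0" by (intro sum.neutral) (metis xlnx_zero mult_eq_0_iff)
    thus ?thesis using True unfolding m_def by simp
  next
    case False
    hence mp: "m > 0" using m0 by auto
    have "(\<Sum>k\<in>K. D k * (l k - m)) \<le> (\<Sum>k\<in>K. D k * (xlnx (l k) - l k * ln m))"
      using xlnx_tangent l D mp by (intro sum_mono mult_left_mono) auto
    also have "(\<Sum>k\<in>K. D k * (l k - m)) = m - m"
      using D1 by (simp add: right_diff_distrib sum_subtractf sum_distrib_right[symmetric] m_def)
    also have "(\<Sum>k\<in>K. D k * (xlnx (l k) - l k * ln m)) = (\<Sum>k\<in>K. D k * xlnx (l k)) - m * ln m"
      by (simp add: right_diff_distrib sum_subtractf sum_distrib_right m_def mult.assoc)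
    finally show ?thesis using mp unfolding m_def[symmetric] by (simp add: xlnx_def)
  qed
qed

(* A doubly stochastic matrix D can only decrease \<Sum> xlnx: the classical majorization
   argument that makes the entropy of a spectrum basis independent. *)
lemma xlnx_doubly_stochastic:
  assumes J: "finite J" and K: "finite K" and D: "\<And>j k. j \<in> J \<Longrightarrow> k \<in> K \<Longrightarrow> D j k \<ge> 0"
    and rows: "\<And>j. j \<in> J \<Longrightarrow> (\<Sum>k\<in>K. D j k) = 1"
    and cols: "\<And>k. k \<in> K \<Longrightarrow> (\<Sum>j\<in>J. D j k) = 1"
    and l: "\<And>k. k \<in> K \<Longrightarrow> l k \<ge> 0"
  shows "(\<Sum>j\<in>J. xlnx (\<Sum>k\<in>K. D j k * l k)) \<le> (\<Sum>k\<in>K. xlnx (l k))"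
proof -
  have "(\<Sum>j\<in>J. xlnx (\<Sum>k\<in>K. D j k * l k)) \<le> (\<Sum>j\<in>J. \<Sum>k\<in>K. D j k * xlnx (l k))"
    using xlnx_jensen[OF K] D rows l by (intro sum_mono) auto
  also have "\<dots> = (\<Sum>k\<in>K. (\<Sum>j\<in>J. D j k) * xlnx (l k))"
    by (subst sum.swap) (simp add: sum_distrib_right)
  also have "\<dots> = (\<Sum>k\<in>K. xlnx (l k))" using cols by simp
  finally show ?thesis .
qed

(* Superadditivity of xlnx on nonnegative reals (the entropy of a distribution is \<ge> 0). *)
lemma xlnx_superadditive:
  assumes K: "finite K" and l: "\<And>k. k \<in> K \<Longrightarrow> l k \<ge> 0"
  shows "(\<Sum>k\<in>K. xlnx (l k)) \<le> xlnx (\<Sum>k\<in>K. l k)"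
proof -
  define m where "m = (\<Sum>k\<in>K. l k)"
  have m0: "m \<ge> 0" unfolding m_def using l by (auto intro: sum_nonneg)
  show ?thesis
  proof (cases "m = 0")
    case True
    hence "\<forall>k\<in>K. l k = 0" using sum_nonneg_eq_0_iff[OF K, of l] l unfolding m_def by auto
    thus ?thesis using True unfolding m_def by simp
  next
    case False
    hence mp: "m > 0" using m0 by auto
    have "xlnx (l k) \<le> l k * ln m" if k: "k \<in> K" for k
    proof -
      have lm: "l k \<le> m" unfolding m_def using l k by (intro member_le_sum[OF k _ K]) auto
      show ?thesis
        using lm mp l[OF k] by (cases "l k = 0") (auto simp: xlnx_def intro!: mult_left_mono)
    qed
    hence "(\<Sum>k\<in>K. xlnx (l k)) \<le> (\<Sum>k\<in>K. l k * ln m)" by (rule sum_mono)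
    also have "\<dots> = xlnx m" using mp by (simp add: xlnx_def m_def sum_distrib_right)
    finally show ?thesis unfolding m_def .
  qed
qed

lemma xlnx_mixing_term:
  assumes a: "a \<ge> 0" and b: "b \<ge> 0" and x: "x > 0" and y: "y > 0"
  shows "xlnx (a + b) - xlnx a - xlnx b \<le> - (a * (ln x - ln (x+y)) + b * (ln y - ln (x+y)))"
proof -
  have lx: "ln x - ln (x+y) \<le> 0" and ly: "ln y - ln (x+y) \<le> 0" using x y by auto
  consider "a = 0" | "b = 0" | "a > 0" "b > 0" using a b by force
  thus ?thesis
  proof cases
    case 1 thus ?thesis using b ly by (simp add: mult_nonneg_nonpos)
  next
    case 2 thus ?thesis using a lx by (simp add: mult_nonneg_nonpos)
  next
    case 3
    define s where "s = a + b"
    have sp: "s > 0" using 3 s_def by auto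
    have ga: "a * (ln a - ln (s * (x/(x+y)))) \<ge> a - s * (x/(x+y))"
      using 3 sp x y by (intro ln_ratio_lower) auto
    have gb: "b * (ln b - ln (s * (y/(x+y)))) \<ge> b - s * (y/(x+y))"
      using 3 sp x y by (intro ln_ratio_lower) auto
    have ex: "ln (s * (x/(x+y))) = ln s + ln x - ln (x+y)"
      and ey: "ln (s * (y/(x+y))) = ln s + ln y - ln (x+y)"
      using sp x y by (simp_all add: ln_mult ln_div)
    have hx: "a * ln a - a * ln s - a * ln x + a * ln (x+y) \<ge> a - s * (x/(x+y))"
      using ga unfolding ex by (simp add: algebra_simps)
    have hy: "b * ln b - b * ln s - b * ln y + b * ln (x+y) \<ge> b - s * (y/(x+y))"
      using gb unfolding ey by (simp add: algebra_simps)
    have "s * (x/(x+y)) + s * (y/(x+y)) = s"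
      using x y by (simp add: add_divide_distrib[symmetric] distrib_left[symmetric])
    moreover have "s * ln s = a * ln s + b * ln s" unfolding s_def by (simp add: algebra_simps)
    moreover have "xlnx (a + b) - xlnx a - xlnx b = s * ln s - a * ln a - b * ln b"
      using 3 sp unfolding s_def xlnx_def by auto
    ultimately show ?thesis using hx hy s_def by (simp add: algebra_simps)
  qed
qed

(* Summed version: the mixing gains of pairs (a j, b j) are dominated by the mixing gain of
   their totals. This is the scalar core of the concavity of entropy. *)
lemma xlnx_mixing_sum:
  assumes J: "finite J" and a: "\<And>j. j \<in> J \<Longrightarrow> a j \<ge> 0" and b: "\<And>j. j \<in> J \<Longrightarrow> b j \<ge> 0"
  shows "(\<Sum>j\<in>J. xlnx (a j + b j) - xlnx (a j) - xlnx (b j))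
    \<le> xlnx (sum a J + sum b J) - xlnx (sum a J) - xlnx (sum b J)"
proof -
  define x where "x = sum a J"
  define y where "y = sum b J"
  have x0: "x \<ge> 0" and y0: "y \<ge> 0" unfolding x_def y_def using a b by (auto intro: sum_nonneg)
  consider "x = 0" | "y = 0" | "x > 0" "y > 0" using x0 y0 by force
  thus ?thesis
  proof cases
    case 1
    hence "\<forall>j\<in>J. a j = 0" using sum_nonneg_eq_0_iff[OF J, of a] a unfolding x_def by auto
    thus ?thesis using 1 unfolding x_def by simp
  next
    case 2
    hence "\<forall>j\<in>J. b j = 0" using sum_nonneg_eq_0_iff[OF J, of b] b unfolding y_def by auto
    thus ?thesis using 2 unfolding y_def by simp
  next
    case 3
    have "(\<Sum>j\<in>J. xlnx (a j + b j) - xlnx (a j) - xlnx (b j))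
       \<le> (\<Sum>j\<in>J. - (a j * (ln x - ln (x+y)) + b j * (ln y - ln (x+y))))"
      using xlnx_mixing_term a b 3 by (intro sum_mono) auto
    also have "\<dots> = - (x * (ln x - ln (x+y)) + y * (ln y - ln (x+y)))"
      unfolding x_def y_def by (simp add: sum.distrib sum_distrib_right sum_negf sum_subtractf)
    also have "\<dots> = xlnx (x + y) - xlnx x - xlnx y" using 3 by (simp add: xlnx_def algebra_simps)
    finally show ?thesis unfolding x_def y_def .
  qed
qed

lemma xlnx_le_log_average:
  assumes J: "finite J" and c: "\<And>j. j \<in> J \<Longrightarrow> c j \<ge> 0" and c1: "sum c J = 1"
    and lam: "lam \<ge> 0" and nu: "\<And>j. j \<in> J \<Longrightarrow> nu j \<ge> 0"
    and cond: "lam > 0 \<Longrightarrow> (\<forall>j\<in>J. nu j = 0 \<longrightarrow> c j = 0) \<and> lam * (\<Sum>j\<in>J. c j / nu j) \<le> 1"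
  shows "xlnx lam \<le> lam * (\<Sum>j\<in>J. c j * (if nu j > 0 then ln (nu j) else 0))"
proof (cases "lam = 0")
  case False
  hence lp: "lam > 0" using lam by auto
  from cond[OF lp] have z: "\<forall>j\<in>J. nu j = 0 \<longrightarrow> c j = 0"
    and s: "lam * (\<Sum>j\<in>J. c j / nu j) \<le> 1" by auto
  have "c j * (ln lam + 1) - lam * (c j / nu j) \<le> c j * (if nu j > 0 then ln (nu j) else 0)"
    if j: "j \<in> J" for j
  proof (cases "nu j > 0")
    case True
    have "nu j * (ln (nu j) - ln lam) \<ge> nu j - lam" by (rule ln_ratio_lower[OF True lp])
    hence "ln (nu j) \<ge> ln lam + 1 - lam / nu j" using True by (simp add: field_simps)
    hence "c j * ln (nu j) \<ge> c j * (ln lam + 1 - lam / nu j)" using c j by (intro mult_left_mono) auto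
    thus ?thesis using True by (simp add: algebra_simps)
  next
    case False
    thus ?thesis using nu z j by force
  qed
  hence "(\<Sum>j\<in>J. c j * (ln lam + 1) - lam * (c j / nu j))
      \<le> (\<Sum>j\<in>J. c j * (if nu j > 0 then ln (nu j) else 0))" by (rule sum_mono)
  also have "(\<Sum>j\<in>J. c j * (ln lam + 1) - lam * (c j / nu j)) = (ln lam + 1) - lam * (\<Sum>j\<in>J. c j / nu j)"
    using c1 by (simp add: sum_subtractf sum_distrib_right[symmetric] sum_distrib_left)
  finally have "ln lam \<le> (\<Sum>j\<in>J. c j * (if nu j > 0 then ln (nu j) else 0))" using s by simp
  thus ?thesis using lp by (simp add: xlnx_def)
qed simp

(* Scalar core of the subadditivity of entropy: if the weights nu are obtained by merging
   two families lam, kap through column-stochastic matrices c, d, and each lam k, kap k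
   satisfies the domination condition, then \<Sum> xlnx lam + \<Sum> xlnx kap \<le> \<Sum> xlnx nu. *)
lemma xlnx_sum_le_merge:
  assumes J: "finite J" and K: "finite K" and L: "finite L"
    and c: "\<And>j k. j \<in> J \<Longrightarrow> k \<in> K \<Longrightarrow> c j k \<ge> 0" and c1: "\<And>k. k \<in> K \<Longrightarrow> (\<Sum>j\<in>J. c j k) = 1"
    and d: "\<And>j k. j \<in> J \<Longrightarrow> k \<in> L \<Longrightarrow> d j k \<ge> 0" and d1: "\<And>k. k \<in> L \<Longrightarrow> (\<Sum>j\<in>J. d j k) = 1"
    and lam: "\<And>k. k \<in> K \<Longrightarrow> lam k \<ge> 0" and kap: "\<And>k. k \<in> L \<Longrightarrow> kap k \<ge> 0"
    and nu: "\<And>j. j \<in> J \<Longrightarrow> nu j = (\<Sum>k\<in>K. lam k * c j k) + (\<Sum>k\<in>L. kap k * d j k)"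
    and condc: "\<And>k. k \<in> K \<Longrightarrow> lam k > 0 \<Longrightarrow>
      (\<forall>j\<in>J. nu j = 0 \<longrightarrow> c j k = 0) \<and> lam k * (\<Sum>j\<in>J. c j k / nu j) \<le> 1"
    and condd: "\<And>k. k \<in> L \<Longrightarrow> kap k > 0 \<Longrightarrow>
      (\<forall>j\<in>J. nu j = 0 \<longrightarrow> d j k = 0) \<and> kap k * (\<Sum>j\<in>J. d j k / nu j) \<le> 1"
  shows "(\<Sum>k\<in>K. xlnx (lam k)) + (\<Sum>k\<in>L. xlnx (kap k)) \<le> (\<Sum>j\<in>J. xlnx (nu j))"
proof -
  define g where "g j = (if nu j > 0 then ln (nu j) else 0)" for j
  have nu0: "nu j \<ge> 0" if "j \<in> J" for j
    unfolding nu[OF that] using lam kap c d that by (auto intro!: add_nonneg_nonneg sum_nonneg)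
  have "(\<Sum>k\<in>K. xlnx (lam k)) \<le> (\<Sum>k\<in>K. lam k * (\<Sum>j\<in>J. c j k * g j))"
    unfolding g_def using xlnx_le_log_average[OF J] c c1 lam nu0 condc by (intro sum_mono) auto
  moreover have "(\<Sum>k\<in>L. xlnx (kap k)) \<le> (\<Sum>k\<in>L. kap k * (\<Sum>j\<in>J. d j k * g j))"
    unfolding g_def using xlnx_le_log_average[OF J] d d1 kap nu0 condd by (intro sum_mono) auto
  moreover have "(\<Sum>k\<in>K. lam k * (\<Sum>j\<in>J. c j k * g j)) + (\<Sum>k\<in>L. kap k * (\<Sum>j\<in>J. d j k * g j))
     = (\<Sum>j\<in>J. nu j * g j)"
  proof -
    have "(\<Sum>j\<in>J. nu j * g j)
        = (\<Sum>j\<in>J. \<Sum>k\<in>K. lam k * c j k * g j) + (\<Sum>j\<in>J. \<Sum>k\<in>L. kap k * d j k * g j)"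
      by (simp add: nu distrib_right sum_distrib_right sum.distrib)
    also have "\<dots> = (\<Sum>k\<in>K. lam k * (\<Sum>j\<in>J. c j k * g j)) + (\<Sum>k\<in>L. kap k * (\<Sum>j\<in>J. d j k * g j))"
      by (simp add: sum.swap[of _ J] sum_distrib_left mult.assoc)
    finally show ?thesis by simp
  qed
  moreover have "(\<Sum>j\<in>J. nu j * g j) = (\<Sum>j\<in>J. xlnx (nu j))"
    using nu0 by (intro sum.cong) (auto simp: g_def xlnx_def)
  ultimately show ?thesis by linarith
qed

lemma xlnx_scale:
  assumes "c > 0" "x \<ge> 0"
  shows "xlnx (c * x) = c * xlnx x + x * xlnx c"
proof (cases "x = 0")
  case False
  hence "x > 0" using assms by auto
  hence "\<not> c * x \<le> 0" using assms by (simp add: not_le)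
  thus ?thesis using assms \<open>x > 0\<close> by (simp add: xlnx_def ln_mult algebra_simps)
qed simp


lemma mat_adjoint_dims [simp]:
  "dim_row (mat_adjoint A) = dim_col A" "dim_col (mat_adjoint A) = dim_row A"
  unfolding mat_adjoint_def by auto

lemma mat_adjoint_index [simp]:
  "i < dim_col A \<Longrightarrow> j < dim_row A \<Longrightarrow> mat_adjoint A $$ (i,j) = cnj (A $$ (j,i))"
  unfolding mat_adjoint_def by (simp add: mat_of_rows_def)

lemma mat_adjoint_carrier [simp]: "A \<in> carrier_mat n m \<Longrightarrow> mat_adjoint A \<in> carrier_mat m n"
  by auto

lemma mat_adjoint_adjoint [simp]: "mat_adjoint (mat_adjoint (A :: complex mat)) = A"
  by (rule eq_matI) auto

lemma mat_adjoint_one [simp]: "mat_adjoint (1\<^sub>m n) = (1\<^sub>m n :: complex mat)"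
  by (rule eq_matI) auto

lemma mat_adjoint_mult:
  "A \<in> carrier_mat n m \<Longrightarrow> B \<in> carrier_mat m k \<Longrightarrow>
    mat_adjoint (A * B) = mat_adjoint B * mat_adjoint (A :: complex mat)"
  by (rule eq_matI) (auto simp: scalar_prod_def mult.commute cnj_sum intro!: sum.cong)

lemma mat_adjoint_four_block_diag:
  assumes "A \<in> carrier_mat n n" "D \<in> carrier_mat m m"
  shows "mat_adjoint (four_block_mat A (0\<^sub>m n m) (0\<^sub>m m n) (D :: complex mat))
    = four_block_mat (mat_adjoint A) (0\<^sub>m n m) (0\<^sub>m m n) (mat_adjoint D)"
  by (rule eq_matI) (insert assms, auto simp: four_block_mat_def)

lemma cnorm_sq: "complex_of_real ((cmod z)\<^sup>2) = z * cnj z"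
  by (metis complex_norm_square of_real_power)

lemma sprod_self_vnorm2: "v \<bullet>c v = complex_of_real (vnorm2 v)"
  unfolding scalar_prod_def vnorm2_def
  by (auto simp: lessThan_atLeast0 intro!: sum.cong) (metis complex_norm_square of_real_power)

lemma vnorm2_pos:
  assumes "v \<in> carrier_vec n" "v \<noteq> 0\<^sub>v n"
  shows "vnorm2 v > 0"
proof -
  have "v \<bullet>c v \<noteq> 0" using assms by simp
  moreover have "vnorm2 v \<ge> 0" unfolding vnorm2_def by (auto intro: sum_nonneg)
  ultimately show ?thesis unfolding sprod_self_vnorm2 by auto
qed

lemma sprod_scale_real:
  assumes "v \<in> carrier_vec n" "w \<in> carrier_vec n"
  shows "(complex_of_real a \<cdot>\<^sub>v v) \<bullet>c (complex_of_real b \<cdot>\<^sub>v w) = complex_of_real (a*b) * (v \<bullet>c w)"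
  using assms unfolding scalar_prod_def by (auto simp: sum_distrib_left intro!: sum.cong)

definition normalize :: "complex vec \<Rightarrow> complex vec" where
  "normalize v = complex_of_real (1 / sqrt (vnorm2 v)) \<cdot>\<^sub>v v"

lemma normalize_unit:
  assumes v: "v \<in> carrier_vec n" and v0: "v \<noteq> 0\<^sub>v n"
  shows "normalize v \<in> carrier_vec n" "normalize v \<bullet>c normalize v = 1"
proof -
  show "normalize v \<in> carrier_vec n" using v unfolding normalize_def by auto
  have "normalize v \<bullet>c normalize v
      = complex_of_real (1 / sqrt (vnorm2 v) * (1 / sqrt (vnorm2 v))) * (v \<bullet>c v)"
    unfolding normalize_def by (rule sprod_scale_real[OF v v])
  also have "\<dots> = 1" using vnorm2_pos[OF v v0]
    by (simp add: sprod_self_vnorm2 real_sqrt_mult[symmetric] del: of_real_mult)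
  finally show "normalize v \<bullet>c normalize v = 1" .
qed

lemma normalize_id: "v \<bullet>c v = 1 \<Longrightarrow> normalize v = v"
  unfolding normalize_def sprod_self_vnorm2 by simp

lemma corthogonal_normalize:
  assumes o: "corthogonal ws" and ws: "set ws \<subseteq> carrier_vec n"
  shows "corthogonal (map normalize ws)" "set (map normalize ws) \<subseteq> carrier_vec n"
    "\<And>w. w \<in> set (map normalize ws) \<Longrightarrow> w \<bullet>c w = 1"
proof -
  have nz: "ws ! i \<noteq> 0\<^sub>v n" if "i < length ws" for i
    using o ws that unfolding corthogonal_def by (metis conjugate_zero_vec nth_mem scalar_prod_left_zero subsetD)
  hence nz': "w \<noteq> 0\<^sub>v n" if "w \<in> set ws" for w using that by (metis in_set_conv_nth)
  show "set (map normalize ws) \<subseteq> carrier_vec n" using ws nz' normalize_unit by auto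
  show "w \<bullet>c w = 1" if "w \<in> set (map normalize ws)" for w using that ws nz' normalize_unit by auto
  show "corthogonal (map normalize ws)" unfolding corthogonal_def
  proof (intro allI impI)
    fix i j assume i: "i < length (map normalize ws)" and j: "j < length (map normalize ws)"
    have c: "ws ! i \<in> carrier_vec n" "ws ! j \<in> carrier_vec n" using i j ws by auto
    have p: "vnorm2 (ws ! i) > 0" "vnorm2 (ws ! j) > 0" using vnorm2_pos c nz i j by auto
    have "map normalize ws ! i \<bullet>c map normalize ws ! j
      = complex_of_real (1 / sqrt (vnorm2 (ws!i)) * (1 / sqrt (vnorm2 (ws!j)))) * (ws ! i \<bullet>c ws ! j)"
      using i j by (simp only: length_map nth_map normalize_def sprod_scale_real[OF c])
    thus "(map normalize ws ! i \<bullet>c map normalize ws ! j = 0) = (i \<noteq> j)"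
      using o i j p unfolding corthogonal_def by auto
  qed
qed

lemma corthogonal_inv_orthonormal:
  fixes ws :: "complex vec list"
  assumes ws: "set ws \<subseteq> carrier_vec n" "length ws = n"
    and u: "\<And>w. w \<in> set ws \<Longrightarrow> w \<bullet>c w = 1"
  shows "corthogonal_inv (mat_of_cols n ws) = mat_adjoint (mat_of_cols n ws)"
proof (rule eq_matI)
  fix i j assume i: "i < dim_row (mat_adjoint (mat_of_cols n ws))"
    and j: "j < dim_col (mat_adjoint (mat_of_cols n ws))"
  hence i': "i < n" "i < length ws" and j': "j < n" using ws by auto
  have wi: "ws ! i \<in> carrier_vec n" "ws ! i \<bullet>c ws ! i = 1" using ws u i' by auto
  have vv: "vec n (($) (ws ! i)) = ws ! i" by (rule eq_vecI, insert wi, auto)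
  have "mat_adjoint (mat_of_cols n ws) $$ (i, j) = cnj (ws ! i $ j)"
    using i' j' ws by (simp add: mat_of_cols_def)
  thus "corthogonal_inv (mat_of_cols n ws) $$ (i, j) = mat_adjoint (mat_of_cols n ws) $$ (i, j)"
    unfolding corthogonal_inv_def using i' j' wi
    by (simp add: vec_inv_def mat_of_rows_def mat_of_cols_def cols_def vv)
qed (insert ws, auto simp: corthogonal_inv_def)

lemma orthonormal_completion:
  fixes v :: "complex vec"
  assumes v: "v \<in> carrier_vec n" and vu: "v \<bullet>c v = 1"
  shows "\<exists>ws. set ws \<subseteq> carrier_vec n \<and> corthogonal ws \<and> length ws = n
    \<and> (\<forall>w\<in>set ws. w \<bullet>c w = 1) \<and> hd ws = v"
proof -
  interpret cof_vec_space n "TYPE(complex)" .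
  have v0: "v \<noteq> 0\<^sub>v n"
  proof
    assume "v = 0\<^sub>v n"
    hence "v \<bullet>c v = 0" by simp
    thus False using vu by simp
  qed
  define b where "b = basis_completion v"
  define ws0 where "ws0 = gram_schmidt n b"
  from basis_completion[OF v v0, folded b_def]
  have dist_b: "distinct b" and indep: "\<not> lin_dep (set b)" and b: "set b \<subseteq> carrier_vec n"
    and hdb: "hd b = v" and len_b: "length b = n" by auto
  have n: "n \<noteq> 0" using v0 v by (metis carrier_vecD eq_vecI less_nat_zero_code zero_carrier_vec)
  from hdb len_b n obtain vs where bv: "b = v # vs" by (cases b) auto
  from gram_schmidt_result[OF b dist_b indep refl, folded ws0_def]
  have ws0: "set ws0 \<subseteq> carrier_vec n" "corthogonal ws0" "length ws0 = n" by (auto simp: len_b)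
  from gram_schmidt_hd[OF v, of vs, folded bv] have "hd ws0 = v" unfolding ws0_def .
  hence "hd (map normalize ws0) = v" using ws0 n normalize_id[OF vu] by (cases ws0) auto
  thus ?thesis using corthogonal_normalize[OF ws0(2,1)] ws0(3) by (intro exI[of _ "map normalize ws0"]) auto
qed

(* Deflation step of the Schur decomposition: a unitary change of basis whose first
   vector is a unit eigenvector for e turns the first column of A into e times e_0. *)
lemma unitary_deflation:
  assumes A: "(A::complex mat) \<in> carrier_mat n n" and e: "eigenvalue A e"
  shows "\<exists>W. similar_mat_wit A (mat_adjoint W * A * W) W (mat_adjoint W)
    \<and> col (mat_adjoint W * A * W) 0 = vec n (\<lambda>i. if i = 0 then e else 0)"
proof -
  define v0 where "v0 = find_eigenvector A e"
  from find_eigenvector[OF A e] have "eigenvector A v0 e" unfolding v0_def .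
  hence v0: "v0 \<in> carrier_vec n" "v0 \<noteq> 0\<^sub>v n" and ev0: "A *\<^sub>v v0 = e \<cdot>\<^sub>v v0"
    using A unfolding eigenvector_def by auto
  define v where "v = normalize v0"
  have v: "v \<in> carrier_vec n" and vu: "v \<bullet>c v = 1"
    using normalize_unit[OF v0] unfolding v_def by auto
  have v_nz: "v \<noteq> 0\<^sub>v n" using vu by auto
  have n: "n \<noteq> 0" using v0 by (metis carrier_vecD eq_vecI less_nat_zero_code zero_carrier_vec)
  have eigen: "A *\<^sub>v v = e \<cdot>\<^sub>v v"
    unfolding v_def normalize_def using A v0 ev0 by (simp add: mult_mat_vec smult_smult_assoc mult.commute)
  obtain ws where ws: "set ws \<subseteq> carrier_vec n" "corthogonal ws" "length ws = n"
    and wsu: "\<forall>w\<in>set ws. w \<bullet>c w = 1" and hd: "hd ws = v"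
    using orthonormal_completion[OF v vu] by blast
  define W where "W = mat_of_cols n ws"
  have W: "W \<in> carrier_mat n n" unfolding W_def using ws by auto
  have adjW: "corthogonal_inv W = mat_adjoint W"
    unfolding W_def using corthogonal_inv_orthonormal[OF ws(1,3)] wsu by blast
  have "inverts_mat (mat_adjoint W) W"
    using corthogonal_inv_result[OF orthogonal_mat_of_cols[OF ws]] adjW unfolding W_def by simp
  hence inv1: "mat_adjoint W * W = 1\<^sub>m n" using W unfolding inverts_mat_def by auto
  hence inv2: "W * mat_adjoint W = 1\<^sub>m n" using mat_mult_left_right_inverse[OF _ W] W by auto
  have "similar_mat_wit (mat_adjoint W * A * W) A (mat_adjoint W) W"
    using W A inv1 inv2 by (intro similar_mat_witI[of _ _ n]) auto
  moreover have "col (mat_adjoint W * A * W) 0 = vec n (\<lambda>i. if i = 0 then e else 0)"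
    using corthogonal_col_ev_0[OF A v v_nz eigen n hd ws] adjW unfolding W_def by simp
  ultimately show ?thesis using similar_mat_wit_sym by blast
qed

lemma deflated_block:
  assumes A': "(A'::complex mat) \<in> carrier_mat n n" and n: "n \<noteq> 0"
    and col0: "col A' 0 = vec n (\<lambda>i. if i = 0 then e else 0)"
    and split: "split_block A' 1 1 = (A1, A2, A0, A3)"
  shows "A' = four_block_mat (mat 1 1 (\<lambda>_. e)) A2 (0\<^sub>m (n - 1) 1) A3"
    and "A2 \<in> carrier_mat 1 (n - 1)" and "A3 \<in> carrier_mat (n - 1) (n - 1)"
    and "char_poly A' = [: -e, 1 :] * char_poly A3"
proof -
  from A' n have "dim_row A' = 1 + (n - 1)" "dim_col A' = 1 + (n - 1)" by auto
  from split_block[OF split this] have A2: "A2 \<in> carrier_mat 1 (n - 1)"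
    and A3: "A3 \<in> carrier_mat (n - 1) (n - 1)" and blocks: "A' = four_block_mat A1 A2 A0 A3" by auto
  have A1: "A1 = mat 1 1 (\<lambda>_. e)"
    using split[unfolded split_block_def Let_def] arg_cong[OF col0, of "\<lambda>v. v $ 0"] A' n
    by (auto simp: col_def)
  have "A' $$ (Suc i, 0) = 0" if "i < n - 1" for i
    using arg_cong[OF col0, of "\<lambda>v. v $ Suc i"] A' that by auto
  hence A0: "A0 = 0\<^sub>m (n - 1) 1" using split[unfolded split_block_def Let_def] A' by auto
  show "A' = four_block_mat (mat 1 1 (\<lambda>_. e)) A2 (0\<^sub>m (n - 1) 1) A3"
    using blocks unfolding A1 A0 .
  show "A2 \<in> carrier_mat 1 (n - 1)" "A3 \<in> carrier_mat (n - 1) (n - 1)" using A2 A3 .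
  have "char_poly A' = char_poly (mat 1 1 (\<lambda>_. e)) * char_poly A3"
    unfolding blocks A1 A0 by (rule char_poly_four_block_zeros_col[OF _ A2 A3]) auto
  also have "char_poly (mat 1 1 (\<lambda>_. e)) = [: -e, 1 :]" by (simp add: char_poly_defs det_def sign_def)
  finally show "char_poly A' = [: -e, 1 :] * char_poly A3" .
qed

lemma unitary_schur:
  assumes "(A::complex mat) \<in> carrier_mat n n" "char_poly A = (\<Prod>e\<leftarrow>es. [:- e, 1:])"
  shows "\<exists>B P. similar_mat_wit A B P (mat_adjoint P) \<and> upper_triangular B \<and> diag_mat B = es"
  using assms
proof (induct es arbitrary: n A)
  case Nil
  with degree_monic_char_poly[of A n] have "n = 0" by auto
  hence "A = 1\<^sub>m 0" using Nil by (auto intro!: eq_matI)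
  thus ?case
    by (intro exI[of _ A] exI[of _ "1\<^sub>m 0"])
      (auto simp: similar_mat_wit_def diag_mat_def upper_triangular_def)
next
  case (Cons e es n A)
  let ?n1 = "n - 1"
  from Cons have A: "A \<in> carrier_mat n n" by auto
  from Cons(3) have cp: "char_poly A = [: -e, 1 :] * (\<Prod>e \<leftarrow> es. [:- e, 1:])" by auto
  have "monic (\<Prod>e\<leftarrow> es. [:- e, 1:])" by (rule monic_prod_list) auto
  hence "degree (char_poly A) = Suc (degree (\<Prod>e\<leftarrow> es. [:- e, 1:]))"
    unfolding cp by (subst degree_mult_eq) auto
  with degree_monic_char_poly[OF A] have n: "n \<noteq> 0" by auto
  have "eigenvalue A e" unfolding eigenvalue_root_char_poly[OF A] cp by simp
  then obtain W where simAA': "similar_mat_wit A (mat_adjoint W * A * W) W (mat_adjoint W)"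
    and col0: "col (mat_adjoint W * A * W) 0 = vec n (\<lambda>i. if i = 0 then e else 0)"
    using unitary_deflation[OF A] by blast
  define A' where "A' = mat_adjoint W * A * W"
  note simAA' = simAA'[folded A'_def] and col0 = col0[folded A'_def]
  have W: "W \<in> carrier_mat n n" and A': "A' \<in> carrier_mat n n"
    using similar_mat_witD2[OF A simAA'] by auto
  obtain A1 A2 A0 A3 where split: "split_block A' 1 1 = (A1,A2,A0,A3)"
    by (cases "split_block A' 1 1") auto
  note block = deflated_block[OF A' n col0 split]
  have "[: -e, 1 :] * char_poly A3 = [: -e, 1 :] * (\<Prod> e \<leftarrow> es. [:- e, 1:])"
    using block(4) cp char_poly_similar[of A' A] simAA' similar_mat_wit_sym
    unfolding similar_mat_def by metis
  hence "char_poly A3 = (\<Prod> e \<leftarrow> es. [:- e, 1:])"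
    by (metis mult_cancel_left pCons_eq_0_iff zero_neq_one)
  from Cons(1)[OF block(3) this] obtain B P' where simIH: "similar_mat_wit A3 B P' (mat_adjoint P')"
    and ut: "upper_triangular B" and diag: "diag_mat B = es" by auto
  from similar_mat_witD2[OF block(3) simIH] have B: "B \<in> carrier_mat ?n1 ?n1"
    and P': "P' \<in> carrier_mat ?n1 ?n1" and PP': "P' * mat_adjoint P' = 1\<^sub>m ?n1" by auto
  let ?P' = "four_block_mat (1\<^sub>m 1) (0\<^sub>m 1 ?n1) (0\<^sub>m ?n1 1) P'"
  define C where "C = four_block_mat (mat 1 1 (\<lambda>_. e)) (A2 * P') (0\<^sub>m ?n1 1) B"
  have simA'C: "similar_mat_wit A' C ?P' (mat_adjoint ?P')"
    unfolding block(1) C_def mat_adjoint_four_block_diag[OF one_carrier_mat P'] mat_adjoint_one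
    by (rule similar_mat_wit_four_block[OF similar_mat_wit_refl simIH _ _ _ block(3)],
      insert block(2) P' PP', auto simp: assoc_mult_mat[OF block(2) P' mat_adjoint_carrier[OF P']])
  have diag1: "diag_mat (mat 1 1 (\<lambda>_. e)) = [e]" by (simp add: diag_mat_def)
  have "upper_triangular C" unfolding C_def
    by (intro upper_triangular_four_block[OF _ B _ ut]) auto
  moreover have "diag_mat C = e # es"
    using diag1 unfolding C_def diag[symmetric] by (subst diag_four_block_mat[OF _ B]) auto
  moreover have "mat_adjoint (W * ?P') = mat_adjoint ?P' * mat_adjoint W"
    using W P' n by (intro mat_adjoint_mult) auto
  ultimately show ?case using similar_mat_wit_trans[OF simAA' simA'C] by metis
qed

(* Unitary matrices and spectral decompositions. *)

definition unitary_mat :: "nat \<Rightarrow> complex mat \<Rightarrow> bool" where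
  "unitary_mat n U \<longleftrightarrow> U \<in> carrier_mat n n \<and> U * mat_adjoint U = 1\<^sub>m n \<and> mat_adjoint U * U = 1\<^sub>m n"

lemma unitary_rows: assumes "unitary_mat n U" "i < n" "j < n"
  shows "(\<Sum>k<n. U $$ (i,k) * cnj (U $$ (j,k))) = (if i = j then 1 else 0)"
proof -
  have U: "U \<in> carrier_mat n n" and e: "U * mat_adjoint U = 1\<^sub>m n" using assms unfolding unitary_mat_def by auto
  have "(U * mat_adjoint U) $$ (i,j) = (\<Sum>k<n. U $$ (i,k) * cnj (U $$ (j,k)))"
    using U assms by (simp add: scalar_prod_def lessThan_atLeast0)
  thus ?thesis using e assms by simp
qed

lemma unitary_cols: assumes "unitary_mat n U" "i < n" "j < n"
  shows "(\<Sum>k<n. cnj (U $$ (k,i)) * U $$ (k,j)) = (if i = j then 1 else 0)"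
proof -
  have U: "U \<in> carrier_mat n n" and e: "mat_adjoint U * U = 1\<^sub>m n" using assms unfolding unitary_mat_def by auto
  have "(mat_adjoint U * U) $$ (i,j) = (\<Sum>k<n. cnj (U $$ (k,i)) * U $$ (k,j))"
    using U assms by (simp add: scalar_prod_def lessThan_atLeast0)
  thus ?thesis using e assms by simp
qed

lemma unitary_row_norms: assumes "unitary_mat n U" "i < n"
  shows "(\<Sum>k<n. (cmod (U $$ (i,k)))\<^sup>2) = 1"
proof -
  have "complex_of_real (\<Sum>k<n. (cmod (U $$ (i,k)))\<^sup>2) = (\<Sum>k<n. U $$ (i,k) * cnj (U $$ (i,k)))"
    by (simp add: cnorm_sq del: of_real_power)
  also have "\<dots> = 1" using unitary_rows[OF assms assms(2)] by simp
  finally show ?thesis using of_real_eq_1_iff by blast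
qed

lemma unitary_col_norms: assumes "unitary_mat n U" "j < n"
  shows "(\<Sum>k<n. (cmod (U $$ (k,j)))\<^sup>2) = 1"
proof -
  have "complex_of_real (\<Sum>k<n. (cmod (U $$ (k,j)))\<^sup>2) = (\<Sum>k<n. cnj (U $$ (k,j)) * U $$ (k,j))"
    by (simp add: cnorm_sq mult.commute del: of_real_power)
  also have "\<dots> = 1" using unitary_cols[OF assms assms(2)] by simp
  finally show ?thesis using of_real_eq_1_iff by blast
qed

(* If U and V are unitary then so is the change-of-basis matrix U^* V; the squared moduli
   of its entries form a doubly stochastic matrix. *)
lemma unitary_adjoint_mult:
  assumes U: "unitary_mat n U" and V: "unitary_mat n V"
  shows "unitary_mat n (mat_adjoint U * V)"
proof -
  have Uc: "U \<in> carrier_mat n n" and Vc: "V \<in> carrier_mat n n" using U V unfolding unitary_mat_def by auto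
  have M: "mat_adjoint U * V \<in> carrier_mat n n" using Uc Vc by auto
  have aU: "mat_adjoint U \<in> carrier_mat n n" and aV: "mat_adjoint V \<in> carrier_mat n n" using Uc Vc by auto
  have "mat_adjoint (mat_adjoint U * V) = mat_adjoint V * U" using mat_adjoint_mult[OF aU Vc] by simp
  hence "mat_adjoint (mat_adjoint U * V) * (mat_adjoint U * V) = mat_adjoint V * (U * (mat_adjoint U * V))"
    using assoc_mult_mat[OF aV Uc M] by simp
  also have "U * (mat_adjoint U * V) = V"
    using U Vc aU by (simp add: assoc_mult_mat[OF Uc aU Vc, symmetric] unitary_mat_def)
  also have "mat_adjoint V * V = 1\<^sub>m n" using V unfolding unitary_mat_def by simp
  finally have inv: "mat_adjoint (mat_adjoint U * V) * (mat_adjoint U * V) = 1\<^sub>m n" .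
  moreover have "(mat_adjoint U * V) * mat_adjoint (mat_adjoint U * V) = 1\<^sub>m n"
    using mat_mult_left_right_inverse[OF mat_adjoint_carrier[OF M] M inv] .
  ultimately show ?thesis using M unfolding unitary_mat_def by simp
qed

lemma adjoint_mult_index: assumes "U \<in> carrier_mat n n" "V \<in> carrier_mat n n" "k < n" "j < n"
  shows "(mat_adjoint U * V) $$ (k,j) = (\<Sum>i<n. cnj (U $$ (i,k)) * V $$ (i,j))"
  using assms by (simp add: scalar_prod_def lessThan_atLeast0)

definition spectral :: "nat \<Rightarrow> complex mat \<Rightarrow> complex mat \<Rightarrow> (nat \<Rightarrow> real) \<Rightarrow> bool" where
  "spectral n X U l \<longleftrightarrow> X \<in> carrier_mat n n \<and> unitary_mat n U \<and>
     (\<forall>i<n. \<forall>j<n. X $$ (i,j) = (\<Sum>k<n. U $$ (i,k) * complex_of_real (l k) * cnj (U $$ (j,k))))"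

definition qform :: "nat \<Rightarrow> complex mat \<Rightarrow> (nat \<Rightarrow> complex) \<Rightarrow> complex" where
  "qform n X z = (\<Sum>i<n. \<Sum>j<n. cnj (z i) * X $$ (i,j) * z j)"

lemma spectral_unitary: "spectral n X U l \<Longrightarrow> unitary_mat n U" unfolding spectral_def by auto
lemma spectral_carrier: "spectral n X U l \<Longrightarrow> X \<in> carrier_mat n n" unfolding spectral_def by auto

lemma qform_spectral: assumes "spectral n X U l"
  shows "qform n X z = (\<Sum>k<n. complex_of_real (l k * (cmod (\<Sum>i<n. cnj (U $$ (i,k)) * z i))\<^sup>2))"
proof -
  have X: "\<And>i j. i < n \<Longrightarrow> j < n \<Longrightarrow> X $$ (i,j) = (\<Sum>k<n. U $$ (i,k) * complex_of_real (l k) * cnj (U $$ (j,k)))"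
    using assms unfolding spectral_def by auto
  have "qform n X z = (\<Sum>i<n. \<Sum>j<n. \<Sum>k<n. complex_of_real (l k) * (cnj (z i) * U $$ (i,k)) * (cnj (U $$ (j,k)) * z j))"
    unfolding qform_def by (intro sum.cong refl, simp add: X sum_distrib_left sum_distrib_right mult_ac)
  also have "\<dots> = (\<Sum>k<n. \<Sum>i<n. \<Sum>j<n. complex_of_real (l k) * (cnj (z i) * U $$ (i,k)) * (cnj (U $$ (j,k)) * z j))"
    by (subst sum.swap, subst (2) sum.swap, simp)
  also have "\<dots> = (\<Sum>k<n. complex_of_real (l k) * ((\<Sum>i<n. cnj (z i) * U $$ (i,k)) * (\<Sum>j<n. cnj (U $$ (j,k)) * z j)))"
    by (simp add: sum_distrib_left sum_distrib_right mult_ac)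
  also have "\<dots> = (\<Sum>k<n. complex_of_real (l k * (cmod (\<Sum>i<n. cnj (U $$ (i,k)) * z i))\<^sup>2))"
  proof (intro sum.cong refl)
    fix k
    have "(\<Sum>i<n. cnj (z i) * U $$ (i,k)) = cnj (\<Sum>i<n. cnj (U $$ (i,k)) * z i)"
      by (simp add: cnj_sum mult.commute)
    thus "complex_of_real (l k) * ((\<Sum>i<n. cnj (z i) * U $$ (i,k)) * (\<Sum>j<n. cnj (U $$ (j,k)) * z j))
      = complex_of_real (l k * (cmod (\<Sum>i<n. cnj (U $$ (i,k)) * z i))\<^sup>2)"
      by (simp only: of_real_mult cnorm_sq mult.commute)
  qed
  finally show ?thesis .
qed

lemma qform_spectral_Re: assumes "spectral n X U l"
  shows "Re (qform n X z) = (\<Sum>k<n. l k * (cmod (\<Sum>i<n. cnj (U $$ (i,k)) * z i))\<^sup>2)"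
  unfolding qform_spectral[OF assms] by (simp add: Re_sum)

lemma qform_eigvec: assumes "spectral n X U l" "k < n"
  shows "qform n X (\<lambda>i. U $$ (i,k)) = complex_of_real (l k)"
proof -
  have U: "unitary_mat n U" using assms spectral_unitary by auto
  have "qform n X (\<lambda>i. U $$ (i,k)) = (\<Sum>m<n. if m = k then complex_of_real (l k) else 0)"
    unfolding qform_spectral[OF assms(1)] by (intro sum.cong refl, simp add: unitary_cols[OF U _ assms(2)])
  also have "\<dots> = complex_of_real (l k)" using assms(2) by simp
  finally show ?thesis .
qed

lemma qform_nonneg_spectral: assumes "spectral n X U l" "\<And>k. k < n \<Longrightarrow> l k \<ge> 0"
  shows "Re (qform n X z) \<ge> 0"
  unfolding qform_spectral_Re[OF assms(1)] using assms(2) by (auto intro!: sum_nonneg)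

lemma qform_add: assumes "X \<in> carrier_mat n n" "Y \<in> carrier_mat n n"
  shows "qform n (X + Y) z = qform n X z + qform n Y z"
  unfolding qform_def using assms by (simp add: distrib_left distrib_right sum.distrib)

lemma spectral_trace: assumes "spectral n X U l"
  shows "(\<Sum>i<n. X $$ (i,i)) = complex_of_real (\<Sum>k<n. l k)"
proof -
  have U: "unitary_mat n U" using assms spectral_unitary by auto
  have "(\<Sum>i<n. X $$ (i,i)) = (\<Sum>i<n. \<Sum>k<n. complex_of_real (l k) * (U $$ (i,k) * cnj (U $$ (i,k))))"
    using assms unfolding spectral_def by (intro sum.cong refl) (simp add: mult_ac)
  also have "\<dots> = (\<Sum>k<n. complex_of_real (l k) * complex_of_real (\<Sum>i<n. (cmod (U $$ (i,k)))\<^sup>2))"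
    by (subst sum.swap) (simp add: sum_distrib_left cnorm_sq del: of_real_power)
  also have "\<dots> = complex_of_real (\<Sum>k<n. l k)"
    using unitary_col_norms[OF U] by simp
  finally show ?thesis .
qed

lemma spectral_hermitian: assumes "spectral n X U l" shows "mat_adjoint X = X"
proof -
  have X: "X \<in> carrier_mat n n" using assms spectral_carrier by auto
  show ?thesis
  proof (rule eq_matI)
    fix i j assume "i < dim_row X" "j < dim_col X"
    hence ij: "i < n" "j < n" using X by auto
    have "mat_adjoint X $$ (i,j) = cnj (X $$ (j,i))" using X ij by simp
    also have "\<dots> = X $$ (i,j)" using assms ij unfolding spectral_def
      by (simp add: cnj_sum mult_ac)
    finally show "mat_adjoint X $$ (i,j) = X $$ (i,j)" .
  qed (insert X, auto)
qed

lemma hermitian_triangular_diagonal: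
  assumes B: "B \<in> carrier_mat n n" and h: "mat_adjoint B = B" and ut: "upper_triangular B"
    and i: "i < n" and j: "j < n"
  shows "B $$ (i,j) = (if i = j then complex_of_real (Re (B $$ (i,i))) else 0)"
proof -
  have sym: "B $$ (i,j) = cnj (B $$ (j,i))" using arg_cong[OF h, of "\<lambda>M. M $$ (i,j)"] i j B by auto
  show ?thesis
  proof (cases "i = j")
    case True
    hence "Im (B $$ (i,i)) = 0" using sym by (metis cnj.sel(2) neg_equal_zero)
    thus ?thesis using True by (simp add: complex_eq_iff)
  next
    case False
    hence "B $$ (i,j) = 0 \<or> B $$ (j,i) = 0" using ut i j B unfolding upper_triangular_def
      by (metis carrier_matD(1) linorder_neqE_nat)
    thus ?thesis using sym False by auto
  qed
qed

lemma unitary_diagonal_spectral: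
  assumes P: "unitary_mat n P" and B: "B \<in> carrier_mat n n"
    and Bd: "\<And>k m. k < n \<Longrightarrow> m < n \<Longrightarrow> B $$ (k,m) = (if k = m then complex_of_real (d k) else 0)"
  shows "spectral n (P * B * mat_adjoint P) P d"
proof -
  have Pc: "P \<in> carrier_mat n n" using P unfolding unitary_mat_def by simp
  have PB: "(P * B) $$ (i,m) = P $$ (i,m) * complex_of_real (d m)" if "i < n" "m < n" for i m
  proof -
    have "(P * B) $$ (i,m) = (\<Sum>k<n. P $$ (i,k) * B $$ (k,m))"
      using Pc B that by (simp add: scalar_prod_def lessThan_atLeast0)
    also have "\<dots> = (\<Sum>k<n. if k = m then P $$ (i,m) * complex_of_real (d m) else 0)"
      using Bd that by (intro sum.cong) auto
    finally show ?thesis using that by simp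
  qed
  have "(P * B * mat_adjoint P) $$ (i,j) = (\<Sum>k<n. P $$ (i,k) * complex_of_real (d k) * cnj (P $$ (j,k)))"
    if "i < n" "j < n" for i j
  proof -
    have "(P * B * mat_adjoint P) $$ (i,j) = (\<Sum>k<n. (P * B) $$ (i,k) * mat_adjoint P $$ (k,j))"
      using Pc B that by (simp add: scalar_prod_def lessThan_atLeast0)
    thus ?thesis using that Pc by (simp add: PB)
  qed
  thus ?thesis using P Pc B unfolding spectral_def by auto
qed

(* Spectral theorem for Hermitian matrices, with eigenvalues given by eigvals_list:
   in a unitary Schur form A = P B P^*, the triangular factor B is again Hermitian. *)
lemma hermitian_spectral:
  assumes A: "A \<in> carrier_mat n n" and h: "mat_adjoint A = A"
  shows "\<exists>U. spectral n A U (\<lambda>k. Re (eigvals_list A ! k)) \<and> length (eigvals_list A) = n"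
proof -
  define es where "es = eigvals_list A"
  have cp: "char_poly A = (\<Prod>a\<leftarrow>es. [:- a, 1:])"
    unfolding es_def eigvals_list_def using char_poly_factorized[OF A] by (metis (mono_tags, lifting) someI_ex)
  from unitary_schur[OF A cp] obtain B P where sim: "similar_mat_wit A B P (mat_adjoint P)"
    and ut: "upper_triangular B" and dg: "diag_mat B = es" by auto
  from similar_mat_witD2[OF A sim] have B: "B \<in> carrier_mat n n" and P: "P \<in> carrier_mat n n"
    and PP: "P * mat_adjoint P = 1\<^sub>m n" and PP2: "mat_adjoint P * P = 1\<^sub>m n" by auto
  have AB: "A = P * B * mat_adjoint P" using sim unfolding similar_mat_wit_def Let_def by auto
  have aP: "mat_adjoint P \<in> carrier_mat n n" using P by auto
  have "mat_adjoint P * A * P = mat_adjoint P * (P * (B * (mat_adjoint P * P)))"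
    unfolding AB using P B aP by (simp add: assoc_mult_mat[of _ n n _ n _ n])
  also have "\<dots> = (mat_adjoint P * P) * (B * (mat_adjoint P * P))"
    using P B aP by (intro assoc_mult_mat[symmetric]) auto
  finally have BA: "B = mat_adjoint P * A * P" using PP2 B by simp
  have "mat_adjoint B = mat_adjoint P * mat_adjoint (mat_adjoint P * A)"
    unfolding BA using aP A P by (intro mat_adjoint_mult[of _ n n]) auto
  also have "mat_adjoint (mat_adjoint P * A) = mat_adjoint A * P"
    using aP A by (simp add: mat_adjoint_mult[of _ n n])
  also have "mat_adjoint P * (mat_adjoint A * P) = mat_adjoint P * A * P"
    using h aP A P by (simp add: assoc_mult_mat[of _ n n _ n _ n])
  finally have hB: "mat_adjoint B = B" using BA by simp
  have Bd: "B $$ (k,m) = (if k = m then complex_of_real (Re (es ! k)) else 0)" if "k < n" "m < n" for k m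
    using hermitian_triangular_diagonal[OF B hB ut that] dg[symmetric] that B
    unfolding diag_mat_def by auto
  have "unitary_mat n P" unfolding unitary_mat_def using P PP PP2 by auto
  hence "spectral n A P (\<lambda>k. Re (es ! k))" unfolding AB using Bd by (rule unitary_diagonal_spectral[OF _ B])
  moreover have "length es = n" using dg B unfolding diag_mat_def by auto
  ultimately show ?thesis unfolding es_def by blast
qed

(* Expressing the eigenvalues of X in another orthonormal basis V gives the diagonal
   entries \<Sum>_k |(U^* V)_kj|^2 l_k, i.e. a doubly stochastic average of the eigenvalues. *)
lemma qform_basis_vec: assumes "spectral n X U l" "unitary_mat n V" "j < n"
  shows "Re (qform n X (\<lambda>i. V $$ (i,j))) = (\<Sum>k<n. (cmod ((mat_adjoint U * V) $$ (k,j)))\<^sup>2 * l k)"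
  unfolding qform_spectral_Re[OF assms(1)]
proof (intro sum.cong refl)
  fix k assume k: "k \<in> {..<n}"
  have "(mat_adjoint U * V) $$ (k,j) = (\<Sum>i<n. cnj (U $$ (i,k)) * V $$ (i,j))"
    using adjoint_mult_index[of U n V k j] assms spectral_unitary[OF assms(1)] k unfolding unitary_mat_def by auto
  thus "l k * (cmod (\<Sum>i<n. cnj (U $$ (i, k)) * V $$ (i, j)))\<^sup>2 = (cmod ((mat_adjoint U * V) $$ (k, j)))\<^sup>2 * l k"
    by simp
qed

lemma spectral_xlnx_basis: assumes X: "spectral n X U l" and V: "unitary_mat n V" and l: "\<And>k. k < n \<Longrightarrow> l k \<ge> 0"
  shows "(\<Sum>j<n. xlnx (Re (qform n X (\<lambda>i. V $$ (i,j))))) \<le> (\<Sum>k<n. xlnx (l k))"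
proof -
  have M: "unitary_mat n (mat_adjoint U * V)" using unitary_adjoint_mult[OF spectral_unitary[OF X] V] .
  have "(\<Sum>j<n. xlnx (Re (qform n X (\<lambda>i. V $$ (i,j))))) = (\<Sum>j<n. xlnx (\<Sum>k<n. (cmod ((mat_adjoint U * V) $$ (k,j)))\<^sup>2 * l k))"
    by (intro sum.cong refl, simp add: qform_basis_vec[OF X V])
  also have "\<dots> \<le> (\<Sum>k<n. xlnx (l k))"
    by (rule xlnx_doubly_stochastic, insert l unitary_col_norms[OF M] unitary_row_norms[OF M], auto)
  finally show ?thesis .
qed

lemma qform_basis_sum: assumes X: "spectral n X U l" and V: "unitary_mat n V"
  shows "(\<Sum>j<n. Re (qform n X (\<lambda>i. V $$ (i,j)))) = (\<Sum>k<n. l k)"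
proof -
  have M: "unitary_mat n (mat_adjoint U * V)" using unitary_adjoint_mult[OF spectral_unitary[OF X] V] .
  have "(\<Sum>j<n. Re (qform n X (\<lambda>i. V $$ (i,j)))) = (\<Sum>j<n. \<Sum>k<n. (cmod ((mat_adjoint U * V) $$ (k,j)))\<^sup>2 * l k)"
    using qform_basis_vec[OF X V] by simp
  also have "\<dots> = (\<Sum>k<n. (\<Sum>j<n. (cmod ((mat_adjoint U * V) $$ (k,j)))\<^sup>2) * l k)"
    by (subst sum.swap) (simp add: sum_distrib_right)
  also have "\<dots> = (\<Sum>k<n. l k)" using unitary_row_norms[OF M] by simp
  finally show ?thesis .
qed

lemma spectral_xlnx_unique: assumes X: "spectral n X U l" and Y: "spectral n X V m"
  and l: "\<And>k. k < n \<Longrightarrow> l k \<ge> 0" and m: "\<And>k. k < n \<Longrightarrow> m k \<ge> 0"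
  shows "(\<Sum>k<n. xlnx (l k)) = (\<Sum>k<n. xlnx (m k))"
proof -
  have 1: "(\<Sum>j<n. xlnx (m j)) \<le> (\<Sum>k<n. xlnx (l k))"
    using spectral_xlnx_basis[OF X spectral_unitary[OF Y] l] qform_eigvec[OF Y] by simp
  have 2: "(\<Sum>j<n. xlnx (l j)) \<le> (\<Sum>k<n. xlnx (m k))"
    using spectral_xlnx_basis[OF Y spectral_unitary[OF X] m] qform_eigvec[OF X] by simp
  from 1 2 show ?thesis by simp
qed

definition vn_entropy_ln :: "complex mat \<Rightarrow> real" where
  "vn_entropy_ln X = ln 2 * vn_entropy X"

lemma vn_entropy_ln_spectral:
  assumes X: "spectral n X U l" and l: "\<And>k. k < n \<Longrightarrow> l k \<ge> 0"
  shows "vn_entropy_ln X = - (\<Sum>k<n. xlnx (l k))"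
proof -
  from hermitian_spectral[OF spectral_carrier[OF X] spectral_hermitian[OF X]] obtain V where
    V: "spectral n X V (\<lambda>k. Re (eigvals_list X ! k))" and len: "length (eigvals_list X) = n" by auto
  have m: "Re (eigvals_list X ! k) \<ge> 0" if "k < n" for k
    using qform_nonneg_spectral[OF X l, of "\<lambda>i. V $$ (i,k)"] qform_eigvec[OF V that] by simp
  have "vn_entropy X = - (\<Sum>k<n. eta2 (Re (eigvals_list X ! k)))"
    unfolding vn_entropy_def by (simp add: sum_list_sum_nth len atLeast0LessThan)
  also have "\<dots> = - (\<Sum>k<n. xlnx (Re (eigvals_list X ! k))) / ln 2"
    by (simp add: eta2_xlnx sum_divide_distrib)
  also have "(\<Sum>k<n. xlnx (Re (eigvals_list X ! k))) = (\<Sum>k<n. xlnx (l k))"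
    using spectral_xlnx_unique[OF V X m l] by simp
  finally show ?thesis unfolding vn_entropy_ln_def by simp
qed

(* Concavity of entropy, spectral form: with a_j, b_j the diagonal entries of X, Y in an
   eigenbasis of X + Y, combine the majorization bound with the scalar mixing estimate. *)
lemma spectral_concave:
  assumes X: "spectral n X U l" and Y: "spectral n Y U' l'" and Z: "spectral n (X + Y) V m"
    and l: "\<And>k. k < n \<Longrightarrow> l k \<ge> 0" and l': "\<And>k. k < n \<Longrightarrow> l' k \<ge> 0"
  shows "(\<Sum>k<n. xlnx (m k)) - xlnx ((\<Sum>k<n. l k) + (\<Sum>k<n. l' k))
     \<le> ((\<Sum>k<n. xlnx (l k)) - xlnx (\<Sum>k<n. l k)) + ((\<Sum>k<n. xlnx (l' k)) - xlnx (\<Sum>k<n. l' k))"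
proof -
  have Xc: "X \<in> carrier_mat n n" and Yc: "Y \<in> carrier_mat n n" using X Y spectral_carrier by auto
  have uV: "unitary_mat n V" using spectral_unitary[OF Z] .
  define a where "a j = Re (qform n X (\<lambda>i. V $$ (i,j)))" for j
  define b where "b j = Re (qform n Y (\<lambda>i. V $$ (i,j)))" for j
  have mab: "m j = a j + b j" if "j < n" for j
    using arg_cong[OF qform_eigvec[OF Z that], of Re] qform_add[OF Xc Yc] unfolding a_def b_def by simp
  have a0: "a j \<ge> 0" for j unfolding a_def by (rule qform_nonneg_spectral[OF X l])
  have b0: "b j \<ge> 0" for j unfolding b_def by (rule qform_nonneg_spectral[OF Y l'])
  have sa: "sum a {..<n} = (\<Sum>k<n. l k)" unfolding a_def by (rule qform_basis_sum[OF X uV])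
  have sb: "sum b {..<n} = (\<Sum>k<n. l' k)" unfolding b_def by (rule qform_basis_sum[OF Y uV])
  have da: "(\<Sum>j<n. xlnx (a j)) \<le> (\<Sum>k<n. xlnx (l k))" unfolding a_def by (rule spectral_xlnx_basis[OF X uV l])
  have db: "(\<Sum>j<n. xlnx (b j)) \<le> (\<Sum>k<n. xlnx (l' k))" unfolding b_def by (rule spectral_xlnx_basis[OF Y uV l'])
  have c: "(\<Sum>j<n. xlnx (a j + b j) - xlnx (a j) - xlnx (b j))
    \<le> xlnx (sum a {..<n} + sum b {..<n}) - xlnx (sum a {..<n}) - xlnx (sum b {..<n})"
    by (rule xlnx_mixing_sum, insert a0 b0, auto)
  have "(\<Sum>k<n. xlnx (m k)) = (\<Sum>j<n. xlnx (a j + b j))" by (intro sum.cong refl, simp add: mab)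
  also have "\<dots> = (\<Sum>j<n. xlnx (a j + b j) - xlnx (a j) - xlnx (b j)) + (\<Sum>j<n. xlnx (a j)) + (\<Sum>j<n. xlnx (b j))"
    by (simp add: sum_subtractf)
  finally show ?thesis using c da db unfolding sa sb by linarith
qed

(* Dual characterization used for subadditivity: if lam |r . y|^2 \<le> \<Sum> m_j |y_j|^2 for all y,
   then r vanishes where m does, and lam \<Sum> |r_j|^2 / m_j \<le> 1. *)
lemma domination_cond: fixes n :: nat assumes m: "\<And>j. j < n \<Longrightarrow> m j \<ge> (0::real)" and lp: "lam > 0"
  and H: "\<And>y. lam * (cmod (\<Sum>j<n. r j * y j))\<^sup>2 \<le> (\<Sum>j<n. m j * (cmod (y j))\<^sup>2)"
  shows "(\<forall>j<n. m j = 0 \<longrightarrow> r j = 0) \<and> lam * (\<Sum>j<n. (cmod (r j))\<^sup>2 / m j) \<le> 1"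
proof
  show "\<forall>j<n. m j = 0 \<longrightarrow> r j = 0"
  proof (intro allI impI)
    fix j assume j: "j < n" and mj: "m j = 0"
    define y where "y = (\<lambda>i. if i = j then (1::complex) else 0)"
    have "(\<Sum>i<n. r i * y i) = (\<Sum>i<n. if i = j then r j else 0)" unfolding y_def
      by (intro sum.cong refl) auto
    also have "\<dots> = r j" using j sum.delta[of "{..<n}" j "\<lambda>_. r j"] by simp
    finally have "(\<Sum>i<n. r i * y i) = r j" .
    moreover have "(\<Sum>i<n. m i * (cmod (y i))\<^sup>2) = (\<Sum>i<n. if i = j then m j else 0)" unfolding y_def
      by (intro sum.cong refl) auto
    moreover have "(\<Sum>i<n. if i = j then m j else 0) = m j" using j sum.delta[of "{..<n}" j "\<lambda>_. m j"] by simp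
    ultimately have "lam * (cmod (r j))\<^sup>2 \<le> 0" using H[of y] mj by simp
    hence "(cmod (r j))\<^sup>2 \<le> 0" using lp by (simp add: mult_le_0_iff)
    thus "r j = 0" by simp
  qed
  define S where "S = (\<Sum>j<n. (cmod (r j))\<^sup>2 / m j)"
  define y where "y = (\<lambda>j. cnj (r j) / complex_of_real (m j))"
  have S0: "S \<ge> 0" unfolding S_def using m by (auto intro!: sum_nonneg)
  have "(\<Sum>j<n. r j * y j) = (\<Sum>j<n. complex_of_real ((cmod (r j))\<^sup>2 / m j))"
    unfolding y_def
  proof (intro sum.cong refl)
    fix j
    have "r j * cnj (r j) = complex_of_real ((cmod (r j))\<^sup>2)" by (simp only: cnorm_sq)
    thus "r j * (cnj (r j) / complex_of_real (m j)) = complex_of_real ((cmod (r j))\<^sup>2 / m j)"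
      by (simp only: times_divide_eq_right of_real_divide)
  qed
  also have "\<dots> = complex_of_real S" unfolding S_def by simp
  finally have 1: "(\<Sum>j<n. r j * y j) = complex_of_real S" .
  have "(\<Sum>j<n. m j * (cmod (y j))\<^sup>2) = S" unfolding S_def y_def
  proof (intro sum.cong refl)
    fix j assume "j \<in> {..<n}"
    show "m j * (cmod (cnj (r j) / complex_of_real (m j)))\<^sup>2 = (cmod (r j))\<^sup>2 / m j"
      by (cases "m j = 0", simp, simp add: norm_divide power_divide power2_eq_square)
  qed
  with H[of y] 1 have "lam * S\<^sup>2 \<le> S" using S0 by simp
  hence "lam * S \<le> 1" using S0 by (cases "S = 0", simp, simp add: power2_eq_square)
  thus "lam * (\<Sum>j<n. (cmod (r j))\<^sup>2 / m j) \<le> 1" unfolding S_def .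
qed

lemma coord_change: assumes "U \<in> carrier_mat n n" "V \<in> carrier_mat n n" "k < n"
  shows "(\<Sum>i<n. cnj (U $$ (i,k)) * (\<Sum>j<n. V $$ (i,j) * y j)) = (\<Sum>j<n. (mat_adjoint U * V) $$ (k,j) * y j)"
proof -
  have "(\<Sum>i<n. cnj (U $$ (i,k)) * (\<Sum>j<n. V $$ (i,j) * y j)) = (\<Sum>j<n. (\<Sum>i<n. cnj (U $$ (i,k)) * V $$ (i,j)) * y j)"
    by (simp add: sum_distrib_left sum_distrib_right mult_ac) (subst sum.swap, simp)
  also have "\<dots> = (\<Sum>j<n. (mat_adjoint U * V) $$ (k,j) * y j)"
  proof (intro sum.cong refl)
    fix j assume "j \<in> {..<n}"
    thus "(\<Sum>i<n. cnj (U $$ (i,k)) * V $$ (i,j)) * y j = (mat_adjoint U * V) $$ (k,j) * y j"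
      using adjoint_mult_index[OF assms(1,2,3), of j] by simp
  qed
  finally show ?thesis .
qed

lemma coord_self: assumes "unitary_mat n V" "k < n"
  shows "(\<Sum>i<n. cnj (V $$ (i,k)) * (\<Sum>j<n. V $$ (i,j) * y j)) = y k"
proof -
  have V: "V \<in> carrier_mat n n" and 1: "mat_adjoint V * V = 1\<^sub>m n" using assms unfolding unitary_mat_def by auto
  have "(\<Sum>i<n. cnj (V $$ (i,k)) * (\<Sum>j<n. V $$ (i,j) * y j)) = (\<Sum>j<n. (mat_adjoint V * V) $$ (k,j) * y j)"
    by (rule coord_change[OF V V assms(2)])
  also have "\<dots> = (\<Sum>j<n. if k = j then y j else 0)" unfolding 1 using assms(2)
    by (intro sum.cong refl) auto
  also have "\<dots> = y k" using assms(2) by simp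
  finally show ?thesis .
qed

(* An eigencomponent of a summand X of a positive sum X + Y is dominated by X + Y, which
   yields the hypothesis of domination_cond for the rows of U^* V. *)
lemma spectral_summand_domination:
  assumes X: "spectral n X U l" and l: "\<And>k. k < n \<Longrightarrow> l k \<ge> 0"
    and Yc: "Y \<in> carrier_mat n n" and Y: "\<And>z. Re (qform n Y z) \<ge> 0"
    and Z: "spectral n (X + Y) V m" and m: "\<And>j. j < n \<Longrightarrow> m j \<ge> 0"
    and k: "k < n" and lk: "l k > 0"
  shows "(\<forall>j<n. m j = 0 \<longrightarrow> (mat_adjoint U * V) $$ (k,j) = 0)
    \<and> l k * (\<Sum>j<n. (cmod ((mat_adjoint U * V) $$ (k,j)))\<^sup>2 / m j) \<le> 1"
proof (rule domination_cond[OF m lk])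
  fix y :: "nat \<Rightarrow> complex"
  have Xc: "X \<in> carrier_mat n n" using spectral_carrier[OF X] .
  have uV: "unitary_mat n V" using spectral_unitary[OF Z] .
  have Uc: "U \<in> carrier_mat n n" and Vc: "V \<in> carrier_mat n n"
    using spectral_unitary[OF X] uV unfolding unitary_mat_def by auto
  define z where "z i = (\<Sum>j<n. V $$ (i,j) * y j)" for i
  have "l k * (cmod (\<Sum>i<n. cnj (U $$ (i,k)) * z i))\<^sup>2
      \<le> (\<Sum>k<n. l k * (cmod (\<Sum>i<n. cnj (U $$ (i,k)) * z i))\<^sup>2)"
    using k l by (intro member_le_sum[of k "{..<n}" "\<lambda>k. l k * (cmod (\<Sum>i<n. cnj (U $$ (i,k)) * z i))\<^sup>2"]) auto
  also have "\<dots> = Re (qform n X z)" unfolding qform_spectral_Re[OF X] ..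
  also have "\<dots> \<le> Re (qform n X z) + Re (qform n Y z)" using Y by simp
  also have "\<dots> = Re (qform n (X + Y) z)" unfolding qform_add[OF Xc Yc] by simp
  also have "\<dots> = (\<Sum>j<n. m j * (cmod (y j))\<^sup>2)"
    unfolding qform_spectral_Re[OF Z] z_def using coord_self[OF uV] by simp
  finally show "l k * (cmod (\<Sum>j<n. (mat_adjoint U * V) $$ (k,j) * y j))\<^sup>2 \<le> (\<Sum>j<n. m j * (cmod (y j))\<^sup>2)"
    unfolding z_def coord_change[OF Uc Vc k] .
qed

lemma spectral_subadditive:
  assumes X: "spectral n X U l" and Y: "spectral n Y U' l'" and Z: "spectral n (X + Y) V m"
    and l: "\<And>k. k < n \<Longrightarrow> l k \<ge> 0" and l': "\<And>k. k < n \<Longrightarrow> l' k \<ge> 0"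
  shows "(\<Sum>k<n. xlnx (l k)) + (\<Sum>k<n. xlnx (l' k)) \<le> (\<Sum>k<n. xlnx (m k))"
proof -
  have Xc: "X \<in> carrier_mat n n" and Yc: "Y \<in> carrier_mat n n" using X Y spectral_carrier by auto
  have uV: "unitary_mat n V" using spectral_unitary[OF Z] .
  have Z': "spectral n (Y + X) V m" using Z comm_add_mat[OF Xc Yc] by simp
  define c where "c j k = (cmod ((mat_adjoint U * V) $$ (k,j)))\<^sup>2" for j k
  define d where "d j k = (cmod ((mat_adjoint U' * V) $$ (k,j)))\<^sup>2" for j k
  have M: "unitary_mat n (mat_adjoint U * V)" using unitary_adjoint_mult[OF spectral_unitary[OF X] uV] .
  have M': "unitary_mat n (mat_adjoint U' * V)" using unitary_adjoint_mult[OF spectral_unitary[OF Y] uV] .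
  have mab: "m j = (\<Sum>k<n. l k * c j k) + (\<Sum>k<n. l' k * d j k)" if "j < n" for j
  proof -
    have "m j = Re (qform n X (\<lambda>i. V $$ (i,j))) + Re (qform n Y (\<lambda>i. V $$ (i,j)))"
      using arg_cong[OF qform_eigvec[OF Z that], of Re] qform_add[OF Xc Yc] by simp
    thus ?thesis unfolding qform_basis_vec[OF X uV that] qform_basis_vec[OF Y uV that] c_def d_def
      by (simp add: mult.commute)
  qed
  have m0: "m j \<ge> 0" if "j < n" for j
    unfolding mab[OF that] c_def d_def using l l' by (auto intro!: add_nonneg_nonneg sum_nonneg)
  show ?thesis
  proof (rule xlnx_sum_le_merge[of "{..<n}" "{..<n}" "{..<n}" c d l l' m])
    show "(\<Sum>j<n. c j k) = 1" "(\<Sum>j<n. d j k) = 1" if "k \<in> {..<n}" for k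
      unfolding c_def d_def using unitary_row_norms[OF M] unitary_row_norms[OF M'] that by auto
    show "(\<forall>j\<in>{..<n}. m j = 0 \<longrightarrow> c j k = 0) \<and> l k * (\<Sum>j<n. c j k / m j) \<le> 1"
      if "k \<in> {..<n}" "l k > 0" for k
      using spectral_summand_domination[OF X l Yc qform_nonneg_spectral[OF Y l'] Z m0] that
      unfolding c_def by simp
    show "(\<forall>j\<in>{..<n}. m j = 0 \<longrightarrow> d j k = 0) \<and> l' k * (\<Sum>j<n. d j k / m j) \<le> 1"
      if "k \<in> {..<n}" "l' k > 0" for k
      using spectral_summand_domination[OF Y l' Xc qform_nonneg_spectral[OF X l] Z' m0] that
      unfolding d_def by simp
  qed (use l l' mab in \<open>auto simp: c_def d_def\<close>)
qed

(* Positive semidefinite matrices and the entropy inequalities in matrix form. *)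

definition psd_mat :: "nat \<Rightarrow> complex mat \<Rightarrow> bool" where
  "psd_mat n X \<longleftrightarrow> X \<in> carrier_mat n n \<and> mat_adjoint X = X \<and> (\<forall>z. Re (qform n X z) \<ge> 0)"

lemma psd_mat_carrier: "psd_mat n X \<Longrightarrow> X \<in> carrier_mat n n"
  unfolding psd_mat_def by simp

lemma psd_spectral:
  assumes "psd_mat n X"
  shows "\<exists>U l. spectral n X U l \<and> (\<forall>k<n. l k \<ge> 0)"
proof -
  from assms have X: "X \<in> carrier_mat n n" and h: "mat_adjoint X = X"
    and p: "\<And>z. Re (qform n X z) \<ge> 0" unfolding psd_mat_def by auto
  from hermitian_spectral[OF X h] obtain U where U: "spectral n X U (\<lambda>k. Re (eigvals_list X ! k))" by auto
  have "Re (eigvals_list X ! k) \<ge> 0" if "k < n" for k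
    using p[of "\<lambda>i. U $$ (i,k)"] qform_eigvec[OF U that] by simp
  thus ?thesis using U by blast
qed

lemma psd_add:
  assumes "psd_mat n X" "psd_mat n Y"
  shows "psd_mat n (X + Y)"
proof -
  have X: "X \<in> carrier_mat n n" and Y: "Y \<in> carrier_mat n n" using assms unfolding psd_mat_def by auto
  have "mat_adjoint (X + Y) = mat_adjoint X + mat_adjoint Y" using X Y by (intro eq_matI) auto
  thus ?thesis using assms X Y unfolding psd_mat_def qform_add[OF X Y] by auto
qed

lemma psd_scale:
  assumes "psd_mat n X" "c \<ge> 0"
  shows "psd_mat n (complex_of_real c \<cdot>\<^sub>m X)"
proof -
  have X: "X \<in> carrier_mat n n" using assms unfolding psd_mat_def by auto
  have "qform n (complex_of_real c \<cdot>\<^sub>m X) z = complex_of_real c * qform n X z" for z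
    unfolding qform_def using X by (simp add: sum_distrib_left mult_ac)
  moreover have "mat_adjoint (complex_of_real c \<cdot>\<^sub>m X) = complex_of_real c \<cdot>\<^sub>m mat_adjoint X"
    using X by (intro eq_matI) auto
  ultimately show ?thesis using assms X unfolding psd_mat_def by auto
qed

lemma spectral_scale:
  assumes "spectral n X U l"
  shows "spectral n (complex_of_real c \<cdot>\<^sub>m X) U (\<lambda>k. c * l k)"
  using assms unfolding spectral_def by (auto simp: sum_distrib_left mult_ac)

definition trace_re :: "complex mat \<Rightarrow> real" where
  "trace_re X = Re (\<Sum>i<dim_row X. X $$ (i,i))"

lemma trace_re_spectral:
  assumes "spectral n X U l"
  shows "trace_re X = (\<Sum>k<n. l k)"
  using spectral_trace[OF assms] spectral_carrier[OF assms] unfolding trace_re_def by simp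

lemma trace_re_add:
  assumes "X \<in> carrier_mat n n" "Y \<in> carrier_mat n n"
  shows "trace_re (X + Y) = trace_re X + trace_re Y"
  using assms unfolding trace_re_def by (simp add: sum.distrib)

lemma trace_re_scale:
  assumes "X \<in> carrier_mat n n"
  shows "trace_re (complex_of_real c \<cdot>\<^sub>m X) = c * trace_re X"
proof -
  have "(\<Sum>i<n. (complex_of_real c \<cdot>\<^sub>m X) $$ (i,i)) = complex_of_real c * (\<Sum>i<n. X $$ (i,i))"
    using assms by (simp add: sum_distrib_left)
  thus ?thesis using assms unfolding trace_re_def by simp
qed

(* tr(X) S(X / tr X) in nats: the entropy of a non-normalized state, weighted by its trace. *)
definition weighted_entropy :: "complex mat \<Rightarrow> real" where
  "weighted_entropy X = xlnx (trace_re X) + vn_entropy_ln X"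

lemma weighted_entropy_nonneg:
  assumes "psd_mat n X"
  shows "weighted_entropy X \<ge> 0"
proof -
  obtain U l where X: "spectral n X U l" and l: "\<forall>k<n. l k \<ge> 0" using psd_spectral[OF assms] by blast
  have "(\<Sum>k<n. xlnx (l k)) \<le> xlnx (\<Sum>k<n. l k)" using l by (intro xlnx_superadditive) auto
  moreover have "vn_entropy_ln X = - (\<Sum>k<n. xlnx (l k))" using vn_entropy_ln_spectral[OF X] l by auto
  ultimately show ?thesis unfolding weighted_entropy_def trace_re_spectral[OF X] by simp
qed

(* Concavity of the von Neumann entropy, in its homogeneous form. *)
lemma weighted_entropy_superadditive:
  assumes X: "psd_mat n X" and Y: "psd_mat n Y"
  shows "weighted_entropy X + weighted_entropy Y \<le> weighted_entropy (X + Y)"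
proof -
  obtain U l where SX: "spectral n X U l" and l: "\<forall>k<n. l k \<ge> 0" using psd_spectral[OF X] by blast
  obtain U' l' where SY: "spectral n Y U' l'" and l': "\<forall>k<n. l' k \<ge> 0" using psd_spectral[OF Y] by blast
  obtain V m where SZ: "spectral n (X + Y) V m" and m: "\<forall>k<n. m k \<ge> 0"
    using psd_spectral[OF psd_add[OF X Y]] by blast
  have "trace_re (X + Y) = (\<Sum>k<n. l k) + (\<Sum>k<n. l' k)"
    using trace_re_add[OF spectral_carrier[OF SX] spectral_carrier[OF SY]]
    unfolding trace_re_spectral[OF SX] trace_re_spectral[OF SY] .
  moreover have "vn_entropy_ln X = - (\<Sum>k<n. xlnx (l k))" "vn_entropy_ln Y = - (\<Sum>k<n. xlnx (l' k))"
    "vn_entropy_ln (X + Y) = - (\<Sum>k<n. xlnx (m k))"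
    using vn_entropy_ln_spectral[OF SX] vn_entropy_ln_spectral[OF SY] vn_entropy_ln_spectral[OF SZ] l l' m
    by auto
  ultimately show ?thesis using spectral_concave[OF SX SY SZ] l l'
    unfolding weighted_entropy_def trace_re_spectral[OF SX] trace_re_spectral[OF SY] by simp
qed

lemma vn_entropy_ln_subadditive:
  assumes X: "psd_mat n X" and Y: "psd_mat n Y"
  shows "vn_entropy_ln (X + Y) \<le> vn_entropy_ln X + vn_entropy_ln Y"
proof -
  obtain U l where SX: "spectral n X U l" and l: "\<forall>k<n. l k \<ge> 0" using psd_spectral[OF X] by blast
  obtain U' l' where SY: "spectral n Y U' l'" and l': "\<forall>k<n. l' k \<ge> 0" using psd_spectral[OF Y] by blast
  obtain V m where SZ: "spectral n (X + Y) V m" and m: "\<forall>k<n. m k \<ge> 0"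
    using psd_spectral[OF psd_add[OF X Y]] by blast
  have "vn_entropy_ln X = - (\<Sum>k<n. xlnx (l k))" "vn_entropy_ln Y = - (\<Sum>k<n. xlnx (l' k))"
    "vn_entropy_ln (X + Y) = - (\<Sum>k<n. xlnx (m k))"
    using vn_entropy_ln_spectral[OF SX] vn_entropy_ln_spectral[OF SY] vn_entropy_ln_spectral[OF SZ] l l' m
    by auto
  thus ?thesis using spectral_subadditive[OF SX SY SZ] l l' by simp
qed

lemma vn_entropy_ln_scale:
  assumes X: "psd_mat n X" and c: "c > 0"
  shows "vn_entropy_ln (complex_of_real c \<cdot>\<^sub>m X) = c * vn_entropy_ln X - xlnx c * trace_re X"
proof -
  obtain U l where SX: "spectral n X U l" and l: "\<forall>k<n. l k \<ge> 0" using psd_spectral[OF X] by blast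
  have "vn_entropy_ln (complex_of_real c \<cdot>\<^sub>m X) = - (\<Sum>k<n. xlnx (c * l k))"
    using vn_entropy_ln_spectral[OF spectral_scale[OF SX]] c l by auto
  moreover have "(\<Sum>k<n. xlnx (c * l k)) = (\<Sum>k<n. c * xlnx (l k) + l k * xlnx c)"
    using xlnx_scale[OF c] l by (intro sum.cong) auto
  moreover have "vn_entropy_ln X = - (\<Sum>k<n. xlnx (l k))" using vn_entropy_ln_spectral[OF SX] l by auto
  ultimately show ?thesis unfolding trace_re_spectral[OF SX]
    by (simp add: sum.distrib sum_distrib_left sum_distrib_right algebra_simps)
qed

(* Bipartite vectors: the reduced density matrix of a (not necessarily normalized) vector. *)

lemma index_pair_bound:
  assumes "i < (dA::nat)" "j < dB"
  shows "i * dB + j < dA * dB"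
proof -
  have "Suc i * dB \<le> dA * dB" using assms by (intro mult_le_mono1) auto
  thus ?thesis using assms by simp
qed

lemma sum_index_pairs: "(\<Sum>k<a*b. g k) = (\<Sum>i<a. \<Sum>j<(b::nat). g (i*b+j))"
proof -
  have "sum g {k..<k+b} = (\<Sum>j<b. g (k+j))" for k
    by (induct b) auto
  thus ?thesis using sum.nat_group[of g b a] by simp
qed

definition reduced_mat :: "nat \<Rightarrow> nat \<Rightarrow> complex vec \<Rightarrow> complex mat" where
  "reduced_mat dA dB v = mat dA dA (\<lambda>(i,i'). \<Sum>j<dB. v $ (i * dB + j) * cnj (v $ (i' * dB + j)))"

lemma reduced_mat_dims [simp]:
  "dim_row (reduced_mat dA dB v) = dA" "dim_col (reduced_mat dA dB v) = dA"
  unfolding reduced_mat_def by auto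

lemma reduced_mat_carrier: "reduced_mat dA dB v \<in> carrier_mat dA dA"
  by (simp add: carrier_matI)

lemma ptrace_outer:
  assumes "v \<in> carrier_vec (dA * dB)"
  shows "ptrace_B dA dB (complex_of_real c \<cdot>\<^sub>m outer v) = complex_of_real c \<cdot>\<^sub>m reduced_mat dA dB v"
proof (rule eq_matI)
  fix i i' assume "i < dim_row (complex_of_real c \<cdot>\<^sub>m reduced_mat dA dB v)"
    "i' < dim_col (complex_of_real c \<cdot>\<^sub>m reduced_mat dA dB v)"
  hence i: "i < dA" "i' < dA" by (auto simp: reduced_mat_def)
  have "ptrace_B dA dB (complex_of_real c \<cdot>\<^sub>m outer v) $$ (i,i') =
      (\<Sum>j<dB. complex_of_real c * (v $ (i * dB + j) * cnj (v $ (i' * dB + j))))"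
    unfolding ptrace_B_def using i assms index_pair_bound[OF i(1)] index_pair_bound[OF i(2)]
    by (auto simp: outer_def intro!: sum.cong)
  thus "ptrace_B dA dB (complex_of_real c \<cdot>\<^sub>m outer v) $$ (i,i')
      = (complex_of_real c \<cdot>\<^sub>m reduced_mat dA dB v) $$ (i,i')"
    using i by (simp add: reduced_mat_def sum_distrib_left)
qed (auto simp: ptrace_B_def reduced_mat_def)

(* The reduced matrix is a Gram matrix, hence positive semidefinite. *)
lemma reduced_mat_psd: "psd_mat dA (reduced_mat dA dB v)"
proof -
  define f where "f i j = v $ (i * dB + j)" for i j
  have "qform dA (reduced_mat dA dB v) z
      = (\<Sum>j<dB. \<Sum>i<dA. \<Sum>i'<dA. (cnj (z i) * f i j) * (cnj (f i' j) * z i'))" for z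
    unfolding qform_def reduced_mat_def f_def
    by (simp add: sum_distrib_left sum_distrib_right mult_ac sum.swap[of _ "{..<dB}"])
  also have "\<dots> z = complex_of_real (\<Sum>j<dB. (cmod (\<Sum>i<dA. cnj (z i) * f i j))\<^sup>2)" for z
    by (simp add: sum_distrib_left sum_distrib_right cnj_sum mult_ac cnorm_sq del: of_real_power)
  moreover have "mat_adjoint (reduced_mat dA dB v) = reduced_mat dA dB v"
    by (rule eq_matI) (auto simp: reduced_mat_def cnj_sum mult.commute)
  ultimately show ?thesis unfolding psd_mat_def by (simp add: sum_nonneg carrier_matI)
qed

lemma trace_re_reduced_mat:
  assumes "v \<in> carrier_vec (dA * dB)"
  shows "trace_re (reduced_mat dA dB v) = vnorm2 v"
proof -
  have "(\<Sum>i<dA. reduced_mat dA dB v $$ (i,i))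
      = complex_of_real (\<Sum>i<dA. \<Sum>j<dB. (cmod (v $ (i*dB+j)))\<^sup>2)"
    by (simp add: reduced_mat_def cnorm_sq del: of_real_power)
  also have "(\<Sum>i<dA. \<Sum>j<dB. (cmod (v $ (i*dB+j)))\<^sup>2) = vnorm2 v"
    unfolding vnorm2_def using assms by (simp add: sum_index_pairs[of "\<lambda>k. (cmod (v $ k))\<^sup>2"])
  finally show ?thesis unfolding trace_re_def by simp
qed

lemma weighted_ent:
  assumes v: "v \<in> carrier_vec (dA * dB)" and v0: "v \<noteq> 0\<^sub>v (dA * dB)"
  shows "ln 2 * (vnorm2 v * ent dA dB v) = weighted_entropy (reduced_mat dA dB v)"
proof -
  define N where "N = vnorm2 v"
  have N: "N > 0" unfolding N_def using vnorm2_pos[OF v v0] .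
  have tr: "trace_re (reduced_mat dA dB v) = N" unfolding N_def by (rule trace_re_reduced_mat[OF v])
  have "ln 2 * ent dA dB v = vn_entropy_ln (complex_of_real (1 / N) \<cdot>\<^sub>m reduced_mat dA dB v)"
    unfolding ent_def ptrace_outer[OF v] vn_entropy_ln_def N_def ..
  also have "\<dots> = 1 / N * vn_entropy_ln (reduced_mat dA dB v) - xlnx (1 / N) * N"
    using vn_entropy_ln_scale[OF reduced_mat_psd[of dA dB v], of "1 / N"] N tr by simp
  also have "\<dots> = vn_entropy_ln (reduced_mat dA dB v) / N + ln N"
    using N by (simp add: xlnx_def ln_div)
  finally show ?thesis
    using N unfolding weighted_entropy_def tr by (simp add: N_def[symmetric] xlnx_def field_simps)
qed

lemma unit_ent:
  assumes v: "v \<in> carrier_vec (dA * dB)" and n: "vnorm2 v = 1"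
  shows "ln 2 * ent dA dB v = vn_entropy_ln (reduced_mat dA dB v)"
proof -
  have "v \<noteq> 0\<^sub>v (dA * dB)" using n by (auto simp: vnorm2_def)
  thus ?thesis using weighted_ent[OF v] n
    unfolding weighted_entropy_def trace_re_reduced_mat[OF v] by (simp add: xlnx_def)
qed

(* The cross terms cancel when al cnj(be) + ga cnj(de) = 0. *)
lemma mixing_identity:
  fixes al be ga de x y x' y' :: complex
  assumes c1: "al * cnj be + ga * cnj de = 0"
  shows "(al * x + be * y) * cnj (al * x' + be * y') + (ga * x + de * y) * cnj (ga * x' + de * y')
    = (al * cnj al + ga * cnj ga) * (x * cnj x') + (be * cnj be + de * cnj de) * (y * cnj y')"
proof -
  have c2: "be * cnj al + de * cnj ga = 0" using arg_cong[OF c1, of cnj] by (simp add: mult.commute)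
  have "(al * x + be * y) * cnj (al * x' + be * y') + (ga * x + de * y) * cnj (ga * x' + de * y')
    = (al * cnj al + ga * cnj ga) * (x * cnj x') + (be * cnj be + de * cnj de) * (y * cnj y')
      + (al * cnj be + ga * cnj de) * (x * cnj y') + (be * cnj al + de * cnj ga) * (y * cnj x')"
    by (simp add: algebra_simps)
  thus ?thesis using c1 c2 by simp
qed

lemma reduced_mat_mixing:
  assumes P: "P \<in> carrier_vec (dA * dB)" and F: "F \<in> carrier_vec (dA * dB)"
    and c1: "al * cnj be + ga * cnj de = 0"
    and ca: "al * cnj al + ga * cnj ga = complex_of_real a"
    and cb: "be * cnj be + de * cnj de = complex_of_real b"
  shows "reduced_mat dA dB (al \<cdot>\<^sub>v P + be \<cdot>\<^sub>v F) + reduced_mat dA dB (ga \<cdot>\<^sub>v P + de \<cdot>\<^sub>v F)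
    = complex_of_real a \<cdot>\<^sub>m reduced_mat dA dB P + complex_of_real b \<cdot>\<^sub>m reduced_mat dA dB F"
proof (rule eq_matI)
  fix i i' assume "i < dim_row (complex_of_real a \<cdot>\<^sub>m reduced_mat dA dB P + complex_of_real b \<cdot>\<^sub>m reduced_mat dA dB F)"
    "i' < dim_col (complex_of_real a \<cdot>\<^sub>m reduced_mat dA dB P + complex_of_real b \<cdot>\<^sub>m reduced_mat dA dB F)"
  hence i: "i < dA" "i' < dA" by auto
  have entry: "(c \<cdot>\<^sub>v P + d \<cdot>\<^sub>v F) $ (k*dB+j) = c * P $ (k*dB+j) + d * F $ (k*dB+j)"
    if "k < dA" "j < dB" for c d k j
    using index_pair_bound[OF that] P F by auto
  have "(reduced_mat dA dB (al \<cdot>\<^sub>v P + be \<cdot>\<^sub>v F) + reduced_mat dA dB (ga \<cdot>\<^sub>v P + de \<cdot>\<^sub>v F)) $$ (i, i')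
     = (\<Sum>j<dB. (al * P $ (i*dB+j) + be * F $ (i*dB+j)) * cnj (al * P $ (i'*dB+j) + be * F $ (i'*dB+j))
        + (ga * P $ (i*dB+j) + de * F $ (i*dB+j)) * cnj (ga * P $ (i'*dB+j) + de * F $ (i'*dB+j)))"
    using i by (simp add: reduced_mat_def entry sum.distrib)
  also have "\<dots> = (\<Sum>j<dB. complex_of_real a * (P $ (i*dB+j) * cnj (P $ (i'*dB+j)))
        + complex_of_real b * (F $ (i*dB+j) * cnj (F $ (i'*dB+j))))"
    by (intro sum.cong refl) (simp only: mixing_identity[OF c1] ca cb)
  also have "\<dots> = (complex_of_real a \<cdot>\<^sub>m reduced_mat dA dB P + complex_of_real b \<cdot>\<^sub>m reduced_mat dA dB F) $$ (i, i')"
    using i by (simp add: reduced_mat_def sum.distrib sum_distrib_left)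
  finally show "(reduced_mat dA dB (al \<cdot>\<^sub>v P + be \<cdot>\<^sub>v F) + reduced_mat dA dB (ga \<cdot>\<^sub>v P + de \<cdot>\<^sub>v F)) $$ (i, i')
    = (complex_of_real a \<cdot>\<^sub>m reduced_mat dA dB P + complex_of_real b \<cdot>\<^sub>m reduced_mat dA dB F) $$ (i, i')" .
qed auto

(* If (ga, de) completes (al, be) as in reduced_mat_mixing, then
   |G|^2 E(G) \<le> a E(P) + b E(F) + [eta2 (a + b) - eta2 a - eta2 b] for G = al P + be F:
   drop the (nonnegative) weighted entropy of the partner vector ga P + de F, use concavity
   to pass to the sum of the two reduced matrices, which equals a R(P) + b R(F), and
   conclude by subadditivity and scaling of the entropy. *)
lemma superposition_entropy_bound:
  fixes P F :: "complex vec" and al be ga de :: complex and a b :: real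
  assumes P: "P \<in> carrier_vec (dA * dB)" and F: "F \<in> carrier_vec (dA * dB)"
    and nP: "vnorm2 P = 1" and nF: "vnorm2 F = 1"
    and c1: "al * cnj be + ga * cnj de = 0"
    and ca: "al * cnj al + ga * cnj ga = complex_of_real a"
    and cb: "be * cnj be + de * cnj de = complex_of_real b"
    and a: "a > 0" and b: "b > 0"
    and G: "al \<cdot>\<^sub>v P + be \<cdot>\<^sub>v F \<noteq> 0\<^sub>v (dA * dB)"
  shows "vnorm2 (al \<cdot>\<^sub>v P + be \<cdot>\<^sub>v F) * ent dA dB (al \<cdot>\<^sub>v P + be \<cdot>\<^sub>v F)
    \<le> a * ent dA dB P + b * ent dA dB F + (eta2 (a + b) - eta2 a - eta2 b)"
proof -
  let ?R = "reduced_mat dA dB"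
  define G1 where "G1 = al \<cdot>\<^sub>v P + be \<cdot>\<^sub>v F"
  define G2 where "G2 = ga \<cdot>\<^sub>v P + de \<cdot>\<^sub>v F"
  have G1: "G1 \<in> carrier_vec (dA * dB)" unfolding G1_def using P F by auto
  have psdP: "psd_mat dA (complex_of_real a \<cdot>\<^sub>m ?R P)" and psdF: "psd_mat dA (complex_of_real b \<cdot>\<^sub>m ?R F)"
    using psd_scale[OF reduced_mat_psd] a b by auto
  have trace: "trace_re (complex_of_real a \<cdot>\<^sub>m ?R P + complex_of_real b \<cdot>\<^sub>m ?R F) = a + b"
    using trace_re_add[OF psd_mat_carrier[OF psdP] psd_mat_carrier[OF psdF]]
    by (simp add: trace_re_scale[OF reduced_mat_carrier] trace_re_reduced_mat P F nP nF)
  have "ln 2 * (vnorm2 G1 * ent dA dB G1) = weighted_entropy (?R G1)"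
    unfolding G1_def by (rule weighted_ent[OF G1[unfolded G1_def] G])
  also have "\<dots> \<le> weighted_entropy (?R G1) + weighted_entropy (?R G2)"
    using weighted_entropy_nonneg[OF reduced_mat_psd] by simp
  also have "\<dots> \<le> weighted_entropy (?R G1 + ?R G2)"
    by (rule weighted_entropy_superadditive[OF reduced_mat_psd reduced_mat_psd])
  also have "?R G1 + ?R G2 = complex_of_real a \<cdot>\<^sub>m ?R P + complex_of_real b \<cdot>\<^sub>m ?R F"
    unfolding G1_def G2_def by (rule reduced_mat_mixing[OF P F c1 ca cb])
  also have "weighted_entropy \<dots> \<le> xlnx (a + b) + vn_entropy_ln (complex_of_real a \<cdot>\<^sub>m ?R P)
      + vn_entropy_ln (complex_of_real b \<cdot>\<^sub>m ?R F)"
    using vn_entropy_ln_subadditive[OF psdP psdF] unfolding weighted_entropy_def trace by simp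
  also have "\<dots> = xlnx (a + b) + a * vn_entropy_ln (?R P) - xlnx a + b * vn_entropy_ln (?R F) - xlnx b"
    using a b by (simp add: vn_entropy_ln_scale[OF reduced_mat_psd] trace_re_reduced_mat P F nP nF)
  also have "\<dots> = ln 2 * (a * ent dA dB P + b * ent dA dB F + (eta2 (a + b) - eta2 a - eta2 b))"
    unfolding unit_ent[OF P nP, symmetric] unit_ent[OF F nF, symmetric] eta2_xlnx
    by (simp add: algebra_simps)
  finally show ?thesis unfolding G1_def by simp
qed

(* An explicit completion (ga, de) of (al, be) for the weights a = N t, b = N (1 - t). *)
lemma completion_coefficients:
  fixes al be :: complex and t :: real
  assumes t0: "0 < t" and t1: "t < 1"
  defines "ga \<equiv> complex_of_real (sqrt (t / (1 - t))) * cnj be"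
    and "de \<equiv> - complex_of_real (sqrt ((1 - t) / t)) * cnj al"
  shows "al * cnj be + ga * cnj de = 0"
    and "al * cnj al + ga * cnj ga = complex_of_real ((cmod al)\<^sup>2 + t / (1 - t) * (cmod be)\<^sup>2)"
    and "be * cnj be + de * cnj de = complex_of_real ((cmod be)\<^sup>2 + (1 - t) / t * (cmod al)\<^sup>2)"
proof -
  have r: "sqrt (t / (1 - t)) * sqrt ((1 - t) / t) = 1"
    using t0 t1 by (simp add: real_sqrt_mult[symmetric])
  have "ga * cnj de = - complex_of_real (sqrt (t / (1 - t)) * sqrt ((1 - t) / t)) * (al * cnj be)"
    unfolding ga_def de_def by (simp add: mult_ac)
  thus "al * cnj be + ga * cnj de = 0" unfolding r by simp
  have "ga * cnj ga = complex_of_real (t / (1 - t)) * (be * cnj be)"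
    unfolding ga_def using t0 t1 by (simp add: mult_ac flip: of_real_mult)
  thus "al * cnj al + ga * cnj ga = complex_of_real ((cmod al)\<^sup>2 + t / (1 - t) * (cmod be)\<^sup>2)"
    by (simp only: of_real_add of_real_mult cnorm_sq)
  have "de * cnj de = complex_of_real ((1 - t) / t) * (al * cnj al)"
    unfolding de_def using t0 t1 by (simp add: mult_ac flip: of_real_mult)
  thus "be * cnj be + de * cnj de = complex_of_real ((cmod be)\<^sup>2 + (1 - t) / t * (cmod al)\<^sup>2)"
    by (simp only: of_real_add of_real_mult cnorm_sq)
qed

lemma eta2_split:
  assumes N: "N > 0" and t0: "0 < t" and t1: "t < 1"
  shows "eta2 N - eta2 (N * t) - eta2 (N * (1 - t)) = N * h2 t"
proof -
  have "\<not> N * t \<le> 0" "\<not> N * (1 - t) \<le> 0" using N t0 t1 by (simp_all add: not_le)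
  hence "eta2 (N * t) = N * t * (log 2 N + log 2 t)"
    and "eta2 (N * (1 - t)) = N * (1 - t) * (log 2 N + log 2 (1 - t))"
    unfolding eta2_def using N t0 t1 by (simp_all add: log_mult)
  moreover have "eta2 N = N * log 2 N" using N by (simp add: eta2_def)
  ultimately show ?thesis unfolding h2_def by (simp add: algebra_simps)
qed

theorem theorem3:
  fixes dA dB :: nat and \<Psi> \<Phi> :: "complex vec" and \<alpha> \<beta> :: complex and t :: real
  assumes "\<Psi> \<in> carrier_vec (dA * dB)" and "\<Phi> \<in> carrier_vec (dA * dB)"
    and "vnorm2 \<Psi> = 1" and "vnorm2 \<Phi> = 1"
    and "(cmod \<alpha>)\<^sup>2 + (cmod \<beta>)\<^sup>2 = 1"
    and "\<alpha> \<cdot>\<^sub>v \<Psi> + \<beta> \<cdot>\<^sub>v \<Phi> \<noteq> 0\<^sub>v (dA * dB)"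
    and "0 < t" and "t < 1"
  shows "vnorm2 (\<alpha> \<cdot>\<^sub>v \<Psi> + \<beta> \<cdot>\<^sub>v \<Phi>) * ent dA dB (\<alpha> \<cdot>\<^sub>v \<Psi> + \<beta> \<cdot>\<^sub>v \<Phi>)
     \<le> (t * (cmod \<beta>)\<^sup>2 + (1 - t) * (cmod \<alpha>)\<^sup>2) / (t * (1 - t))
        * (t * ent dA dB \<Psi> + (1 - t) * ent dA dB \<Phi> + h2 t)"
proof -
  define N where "N = (t * (cmod \<beta>)\<^sup>2 + (1 - t) * (cmod \<alpha>)\<^sup>2) / (t * (1 - t))"
  have "t * (cmod \<beta>)\<^sup>2 + (1 - t) * (cmod \<alpha>)\<^sup>2 > 0"
    using assms(5,7,8) by (cases "\<alpha> = 0") (auto intro: add_nonneg_pos add_pos_nonneg)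
  hence N: "N > 0" unfolding N_def using assms(7,8) by simp
  have a: "(cmod \<alpha>)\<^sup>2 + t / (1 - t) * (cmod \<beta>)\<^sup>2 = N * t"
    and b: "(cmod \<beta>)\<^sup>2 + (1 - t) / t * (cmod \<alpha>)\<^sup>2 = N * (1 - t)"
    unfolding N_def using assms(7,8) by (simp_all add: field_simps)
  have "vnorm2 (\<alpha> \<cdot>\<^sub>v \<Psi> + \<beta> \<cdot>\<^sub>v \<Phi>) * ent dA dB (\<alpha> \<cdot>\<^sub>v \<Psi> + \<beta> \<cdot>\<^sub>v \<Phi>)
     \<le> (N * t) * ent dA dB \<Psi> + (N * (1 - t)) * ent dA dB \<Phi>
       + (eta2 (N * t + N * (1 - t)) - eta2 (N * t) - eta2 (N * (1 - t)))"
    using superposition_entropy_bound[OF assms(1-4) completion_coefficients[OF assms(7,8)]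
        _ _ assms(6), unfolded a b] N assms(7,8) by simp
  also have "\<dots> = N * (t * ent dA dB \<Psi> + (1 - t) * ent dA dB \<Phi> + h2 t)"
    using eta2_split[OF N assms(7,8)] by (simp add: algebra_simps)
  finally show ?thesis unfolding N_def .
qed

end
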